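(* Let $\mathfrak v$ be an exact colinked chain with finite cosupport. Then the subset $\mathbb{LP}(\mathfrak v)^*\subseteq\mathbb{LP}(\mathfrak v)$ parameterizing exact subrepresentations is open and dense in $\mathbb{LP}(\mathfrak v)$.
   Context: Let $k$ be a field. $\mathcal Z$ is the quiver with vertex set $\mathbb Z$ and arrows $\alpha^i\colon i\to i+1$, $\alpha_i\colon i+1\to i$ ($i\in\mathbb Z$). A representation $\mathfrak{v}=(V_i,v_i,v^i)$ has finite-dimensional $k$-spaces $V_i$ and maps $v^i\colon V_i\to V_{i+1}$, $v_i\colon V_{i+1}\to V_i$; compositions $v^i_j$ are $v^{j-1}\circ\cdots\circ v^i$ ($j>i$), $v_j\circ\cdots\circ v_{i-1}$ ($j<i$), identity ($j=i$). A colinked chain satisfies $v_iv^i=0$, $v^iv_i=0$ and $\mathrm{Im}(v_i)+\mathrm{Im}(v^{i-1})=V_i$ for all $i$. A representation is exact if $\ker(v^i)=\mathrm{Im}(v_i)$ and $\ker(v_i)=\mathrm{Im}(v^i)$ for all $i$. A cosupport is $H\subseteq\mathbb Z$ such that for each $i$ there is $j\in H$ with $v^i_j$ injective. $\mathbb{LP}(\mathfrak{v})$ is the set of subrepresentations $\mathfrak w=(W_i)$ (with the restricted maps) with every $W_i\subseteq V_i$ one-dimensional, $v^i(W_i)\subseteq W_{i+1}$, $v_i(W_{i+1})\subseteq W_i$, given the scheme structure of the closed subscheme of $\prod_{i\in H}\mathbb P(V_i)$, for any finite interval cosupport $H$, defined by $v^i_j(x_i)\wedge x_j=0$ for $i,j\in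 H$. *)

theory Defs
  imports "HOL-Algebra.Algebraic_Closure_Type"
begin

(* A representation of the quiver Z over a field 'a is given by
   dims d i = dim V_i, with V_i = coordinate space of column vectors of length d i,
   encoded as functions nat => 'a vanishing from index d i on;
   U i = matrix of v^i : V_i -> V_(i+1)  (d(i+1) x d i),
   D i = matrix of v_i : V_(i+1) -> V_i  (d i x d(i+1)). *)

definition cspace :: "(int \<Rightarrow> nat) \<Rightarrow> int \<Rightarrow> (nat \<Rightarrow> 'a::field) set" where
  "cspace d i = {x. \<forall>n\<ge>d i. x n = 0}"

definition mat_apply :: "(nat \<Rightarrow> nat \<Rightarrow> 'a::field) \<Rightarrow> nat \<Rightarrow> nat \<Rightarrow> (nat \<Rightarrow> 'a) \<Rightarrow> (nat \<Rightarrow> 'a)" where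
  "mat_apply M src tgt x = (\<lambda>r. if r < tgt then (\<Sum>c<src. M r c * x c) else 0)"

definition up_map :: "(int \<Rightarrow> nat) \<Rightarrow> (int \<Rightarrow> nat \<Rightarrow> nat \<Rightarrow> 'a::field) \<Rightarrow> int \<Rightarrow> (nat \<Rightarrow> 'a) \<Rightarrow> (nat \<Rightarrow> 'a)" where
  "up_map d U i = mat_apply (U i) (d i) (d (i + 1))"

definition down_map :: "(int \<Rightarrow> nat) \<Rightarrow> (int \<Rightarrow> nat \<Rightarrow> nat \<Rightarrow> 'a::field) \<Rightarrow> int \<Rightarrow> (nat \<Rightarrow> 'a) \<Rightarrow> (nat \<Rightarrow> 'a)" where
  "down_map d D i = mat_apply (D i) (d (i + 1)) (d i)"

fun ups :: "(int \<Rightarrow> nat) \<Rightarrow> (int \<Rightarrow> nat \<Rightarrow> nat \<Rightarrow> 'a::field) \<Rightarrow> int \<Rightarrow> nat \<Rightarrow> (nat \<Rightarrow> 'a) \<Rightarrow> (nat \<Rightarrow> 'a)" where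
  "ups d U i 0 x = x"
| "ups d U i (Suc k) x = up_map d U (i + int k) (ups d U i k x)"

fun downs :: "(int \<Rightarrow> nat) \<Rightarrow> (int \<Rightarrow> nat \<Rightarrow> nat \<Rightarrow> 'a::field) \<Rightarrow> int \<Rightarrow> nat \<Rightarrow> (nat \<Rightarrow> 'a) \<Rightarrow> (nat \<Rightarrow> 'a)" where
  "downs d D i 0 x = x"
| "downs d D i (Suc k) x = down_map d D (i - int k - 1) (downs d D i k x)"

definition comp_map :: "(int \<Rightarrow> nat) \<Rightarrow> (int \<Rightarrow> nat \<Rightarrow> nat \<Rightarrow> 'a::field) \<Rightarrow> (int \<Rightarrow> nat \<Rightarrow> nat \<Rightarrow> 'a)
    \<Rightarrow> int \<Rightarrow> int \<Rightarrow> (nat \<Rightarrow> 'a) \<Rightarrow> (nat \<Rightarrow> 'a)" where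
  "comp_map d U D i j = (if i \<le> j then ups d U i (nat (j - i)) else downs d D i (nat (i - j)))"

definition colinked_chain :: "(int \<Rightarrow> nat) \<Rightarrow> (int \<Rightarrow> nat \<Rightarrow> nat \<Rightarrow> 'a::field) \<Rightarrow> (int \<Rightarrow> nat \<Rightarrow> nat \<Rightarrow> 'a) \<Rightarrow> bool" where
  "colinked_chain d U D \<longleftrightarrow>
     (\<forall>i. (\<forall>x\<in>cspace d i. down_map d D i (up_map d U i x) = (\<lambda>n. 0))
        \<and> (\<forall>y\<in>cspace d (i + 1). up_map d U i (down_map d D i y) = (\<lambda>n. 0))
        \<and> (\<forall>z\<in>cspace d i. \<exists>y\<in>cspace d (i + 1). \<exists>u\<in>cspace d (i - 1).
              z = (\<lambda>n. down_map d D i y n + up_map d U (i - 1) u n)))"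

definition exact_on :: "(int \<Rightarrow> (nat \<Rightarrow> 'a::field) set) \<Rightarrow> (int \<Rightarrow> (nat \<Rightarrow> 'a) \<Rightarrow> (nat \<Rightarrow> 'a))
    \<Rightarrow> (int \<Rightarrow> (nat \<Rightarrow> 'a) \<Rightarrow> (nat \<Rightarrow> 'a)) \<Rightarrow> bool" where
  "exact_on W upm dn \<longleftrightarrow>
     (\<forall>i. {x\<in>W i. upm i x = (\<lambda>n. 0)} = dn i ` W (i + 1) \<and> {y\<in>W (i + 1). dn i y = (\<lambda>n. 0)} = upm i ` W i)"

definition exact_rep :: "(int \<Rightarrow> nat) \<Rightarrow> (int \<Rightarrow> nat \<Rightarrow> nat \<Rightarrow> 'a::field) \<Rightarrow> (int \<Rightarrow> nat \<Rightarrow> nat \<Rightarrow> 'a) \<Rightarrow> bool" where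
  "exact_rep d U D \<longleftrightarrow> exact_on (cspace d) (up_map d U) (down_map d D)"

definition is_cosupport :: "(int \<Rightarrow> nat) \<Rightarrow> (int \<Rightarrow> nat \<Rightarrow> nat \<Rightarrow> 'a::field) \<Rightarrow> (int \<Rightarrow> nat \<Rightarrow> nat \<Rightarrow> 'a) \<Rightarrow> int set \<Rightarrow> bool" where
  "is_cosupport d U D H \<longleftrightarrow> (\<forall>i. \<exists>j\<in>H. inj_on (comp_map d U D i j) (cspace d i))"

definition finite_interval :: "int set \<Rightarrow> bool" where
  "finite_interval H \<longleftrightarrow> (\<exists>a b. H = {a..b})"

definition is_line :: "(int \<Rightarrow> nat) \<Rightarrow> int \<Rightarrow> (nat \<Rightarrow> 'a::field) set \<Rightarrow> bool" where
  "is_line d i L \<longleftrightarrow> (\<exists>x\<in>cspace d i. x \<noteq> (\<lambda>n. 0) \<and> L = {(\<lambda>n. c * x n) | c. True})"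

definition LP :: "(int \<Rightarrow> nat) \<Rightarrow> (int \<Rightarrow> nat \<Rightarrow> nat \<Rightarrow> 'a::field) \<Rightarrow> (int \<Rightarrow> nat \<Rightarrow> nat \<Rightarrow> 'a)
    \<Rightarrow> (int \<Rightarrow> (nat \<Rightarrow> 'a) set) set" where
  "LP d U D = {W. \<forall>i. is_line d i (W i) \<and> up_map d U i ` W i \<subseteq> W (i + 1)
                   \<and> down_map d D i ` W (i + 1) \<subseteq> W i}"

definition LP_exact :: "(int \<Rightarrow> nat) \<Rightarrow> (int \<Rightarrow> nat \<Rightarrow> nat \<Rightarrow> 'a::field) \<Rightarrow> (int \<Rightarrow> nat \<Rightarrow> nat \<Rightarrow> 'a)
    \<Rightarrow> (int \<Rightarrow> (nat \<Rightarrow> 'a) set) set" where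
  "LP_exact d U D = {W \<in> LP d U D. exact_on W (up_map d U) (down_map d D)}"

(* polynomial functions in the coordinates x i n  (i \<in> H, n < d i) of \<Prod>_{i\<in>H} V_i *)
inductive_set polyfun :: "int set \<Rightarrow> (int \<Rightarrow> nat) \<Rightarrow> ((int \<Rightarrow> nat \<Rightarrow> 'a::field) \<Rightarrow> 'a) set"
  for H d where
  pf_const: "(\<lambda>x. c) \<in> polyfun H d"
| pf_var: "i \<in> H \<Longrightarrow> n < d i \<Longrightarrow> (\<lambda>x. x i n) \<in> polyfun H d"
| pf_add: "f \<in> polyfun H d \<Longrightarrow> g \<in> polyfun H d \<Longrightarrow> (\<lambda>x. f x + g x) \<in> polyfun H d"
| pf_mult: "f \<in> polyfun H d \<Longrightarrow> g \<in> polyfun H d \<Longrightarrow> (\<lambda>x. f x * g x) \<in> polyfun H d"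

(* multihomogeneous polynomial functions (over an infinite field these are exactly the
   functions of multihomogeneous polynomials) *)
definition multihom :: "int set \<Rightarrow> (int \<Rightarrow> nat) \<Rightarrow> ((int \<Rightarrow> nat \<Rightarrow> 'a::field) \<Rightarrow> 'a) \<Rightarrow> bool" where
  "multihom H d f \<longleftrightarrow> f \<in> polyfun H d \<and>
     (\<exists>e :: int \<Rightarrow> nat. \<forall>x (t :: int \<Rightarrow> 'a). (\<forall>i\<in>H. t i \<noteq> 0) \<longrightarrow>
         f (\<lambda>i n. t i * x i n) = (\<Prod>i\<in>H. t i ^ e i) * f x)"

(* Zariski-closed subsets of a set P of families of lines, for the topology induced by
   the embedding W \<mapsto> (W i)_{i\<in>H} into \<Prod>_{i\<in>H} P(V_i) *)
definition zariski_closed_in :: "int set \<Rightarrow> (int \<Rightarrow> nat) \<Rightarrow> (int \<Rightarrow> (nat \<Rightarrow> 'a::field) set) set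
    \<Rightarrow> (int \<Rightarrow> (nat \<Rightarrow> 'a) set) set \<Rightarrow> bool" where
  "zariski_closed_in H d P C \<longleftrightarrow>
     (\<exists>F. (\<forall>f\<in>F. multihom H d f) \<and>
          C = {W\<in>P. \<forall>f\<in>F. \<forall>x. (\<forall>i\<in>H. x i \<in> W i \<and> x i \<noteq> (\<lambda>n. 0)) \<longrightarrow> f x = 0})"

definition zariski_open_in :: "int set \<Rightarrow> (int \<Rightarrow> nat) \<Rightarrow> (int \<Rightarrow> (nat \<Rightarrow> 'a::field) set) set
    \<Rightarrow> (int \<Rightarrow> (nat \<Rightarrow> 'a) set) set \<Rightarrow> bool" where
  "zariski_open_in H d P S \<longleftrightarrow> S \<subseteq> P \<and> zariski_closed_in H d P (P - S)"

definition zariski_dense_in :: "int set \<Rightarrow> (int \<Rightarrow> nat) \<Rightarrow> (int \<Rightarrow> (nat \<Rightarrow> 'a::field) set) set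
    \<Rightarrow> (int \<Rightarrow> (nat \<Rightarrow> 'a) set) set \<Rightarrow> bool" where
  "zariski_dense_in H d P S \<longleftrightarrow> (\<forall>C. zariski_closed_in H d P C \<and> S \<subseteq> C \<longrightarrow> C = P)"

definition base_change :: "(int \<Rightarrow> nat \<Rightarrow> nat \<Rightarrow> 'a::field) \<Rightarrow> (int \<Rightarrow> nat \<Rightarrow> nat \<Rightarrow> 'a alg_closure)" where
  "base_change M = (\<lambda>i r c. to_ac (M i r c))"

end

theory Submission
  imports Defs "HOL-Library.Function_Algebras"
begin

(*
  Every hypothesis on the chain (v_i v^i = 0, v^i v_i = 0, Im v_i + Im v^(i-1) = V_i,
  ker v^i <= Im v_i, and the injectivity of v^j for j < a and of v_j for j >= b that the
  cosupport {a..b} forces) amounts to a matrix identity over k, so it persists over the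
  algebraic closure.

  A point W of LP is exact iff it has no zero link, i.e. no i with v^i(W_i) = 0 and
  v_i(W_(i+1)) = 0, and injectivity confines zero links to [a, b). Hence W is non-exact iff
  every product over i in [a, b) of a coordinate of v^i(x_i) or of v_i(x_(i+1)) vanishes at W,
  which gives openness.

  Density is proved by induction on the number of zero links. Let i0 be the last zero link
  of W. By exactness W_i0 = <v_i0 z> for some z in Im v_(i0+1); choosing y_j spanning W_j and
  z_j in Im v_j (so v^j z_j = 0) for j > i0, with z_(i0+1) = z, each step following v^j when
  v^j y_j <> 0 and lifting along v_j otherwise, the lines <y_j + t z_j> for j > i0 together
  with W_j for j <= i0 form, for all but finitely many t, a point of LP whose zero links are
  those of W except i0. A multihomogeneous f vanishing on the exact points is polynomial in t
  along this family and vanishes for almost all t, hence at t = 0, i.e. at W.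
*)

definition coord_space :: "nat \<Rightarrow> (nat \<Rightarrow> 'a::zero) set" where
  "coord_space n = {x. \<forall>m\<ge>n. x m = 0}"

lemma cspace_eq_coord_space: "cspace d i = coord_space (d i)"
  by (simp add: cspace_def coord_space_def)

definition scale_vec :: "'a::field \<Rightarrow> (nat \<Rightarrow> 'a) \<Rightarrow> (nat \<Rightarrow> 'a)" where
  "scale_vec c x = (\<lambda>n. c * x n)"

interpretation vs: vector_space "scale_vec :: 'a::field \<Rightarrow> _"
  by unfold_locales (auto simp: scale_vec_def fun_eq_iff algebra_simps)

interpretation vs_pair: vector_space_pair "scale_vec :: 'a::field \<Rightarrow> _" "scale_vec :: 'a \<Rightarrow> _"
  by unfold_locales

lemma subspace_coord_space: "vs.subspace (coord_space n)"
  by (auto simp: vs.subspace_def coord_space_def scale_vec_def)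

definition unit_vec :: "nat \<Rightarrow> nat \<Rightarrow> 'a::field" where
  "unit_vec c = (\<lambda>r. if r = c then 1 else 0)"

lemma unit_vec_in_coord_space: "c < n \<Longrightarrow> unit_vec c \<in> coord_space n"
  by (simp add: unit_vec_def coord_space_def)

lemma sum_fun_apply: "(sum f A) x = (\<Sum>a\<in>A. f a x)"
  by (induct A rule: infinite_finite_induct) auto

lemma coord_space_unit_vec_expansion:
  "y \<in> coord_space p \<Longrightarrow> y = (\<Sum>c<p. scale_vec (y c) (unit_vec c))"
  by (auto simp: fun_eq_iff sum_fun_apply scale_vec_def unit_vec_def coord_space_def if_distrib
      cong: if_cong)

lemma mat_apply_in_coord_space: "mat_apply M n p x \<in> coord_space p"
  by (simp add: mat_apply_def coord_space_def)

lemma mat_apply_add: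
  "mat_apply M n p (\<lambda>k. x k + y k) = (\<lambda>r. mat_apply M n p x r + mat_apply M n p y r)"
  by (auto simp: mat_apply_def fun_eq_iff algebra_simps sum.distrib)

lemma mat_apply_diff:
  "mat_apply M n p (\<lambda>k. x k - y k) = (\<lambda>r. mat_apply M n p x r - mat_apply M n p y r)"
  by (auto simp: mat_apply_def fun_eq_iff algebra_simps sum_subtractf)

lemma mat_apply_scale: "mat_apply M n p (\<lambda>k. c * x k) = (\<lambda>r. c * mat_apply M n p x r)"
  by (auto simp: mat_apply_def fun_eq_iff algebra_simps sum_distrib_left)

lemma mat_apply_zero: "mat_apply M n p (\<lambda>k. 0) = (\<lambda>r. 0)"
  by (auto simp: mat_apply_def fun_eq_iff)

lemma linear_mat_apply: "Vector_Spaces.linear scale_vec scale_vec (mat_apply M n p)"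
  by unfold_locales (auto simp: plus_fun_def scale_vec_def mat_apply_add mat_apply_scale)

lemma mat_apply_unit_vec:
  "c < n \<Longrightarrow> mat_apply M n p (unit_vec c) = (\<lambda>r. if r < p then M r c else 0)"
  by (auto simp: mat_apply_def unit_vec_def fun_eq_iff if_distrib cong: if_cong)

lemma mat_apply_cong:
  "(\<And>r c. r < p \<Longrightarrow> c < n \<Longrightarrow> M r c = M' r c) \<Longrightarrow> mat_apply M n p = mat_apply M' n p"
  by (auto simp: mat_apply_def fun_eq_iff)

definition mat_mult :: "nat \<Rightarrow> (nat \<Rightarrow> nat \<Rightarrow> 'a::field) \<Rightarrow> (nat \<Rightarrow> nat \<Rightarrow> 'a) \<Rightarrow> nat \<Rightarrow> nat \<Rightarrow> 'a"
  where "mat_mult m A B = (\<lambda>r c. \<Sum>l<m. A r l * B l c)"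

lemma mat_apply_mat_mult:
  "mat_apply A m p (mat_apply B n m x) = mat_apply (mat_mult m A B) n p x"
  by (auto simp: mat_apply_def mat_mult_def fun_eq_iff sum_distrib_left sum_distrib_right
      mult.assoc intro!: sum.swap)

lemma exists_generalized_inverse:
  "\<exists>N. \<forall>x\<in>coord_space n. mat_apply M n p (mat_apply N p n (mat_apply M n p x)) = mat_apply M n p x"
proof -
  obtain g where g: "range g \<subseteq> coord_space n" "Vector_Spaces.linear scale_vec scale_vec g"
    "\<forall>v\<in>mat_apply M n p ` coord_space n. mat_apply M n p (g v) = v"
    using vs_pair.linear_exists_right_inverse_on[OF linear_mat_apply subspace_coord_space] by blast
  define N where "N = (\<lambda>r c. g (unit_vec c) r)"
  have N_eq: "mat_apply N p n y = g y" if y: "y \<in> coord_space p" for y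
  proof -
    have "g y = g (\<Sum>c<p. scale_vec (y c) (unit_vec c))"
      using coord_space_unit_vec_expansion[OF y] by simp
    also have "\<dots> = (\<Sum>c<p. scale_vec (y c) (g (unit_vec c)))"
      using g(2) by (simp add: linear_iff_module_hom module_hom.sum module_hom.scale)
    finally have gy: "g y = (\<Sum>c<p. scale_vec (y c) (g (unit_vec c)))" .
    have "g y \<in> coord_space n" using g(1) by auto
    then show ?thesis
      by (auto simp: fun_eq_iff mat_apply_def gy sum_fun_apply scale_vec_def N_def coord_space_def
          mult.commute)
  qed
  show ?thesis
    by (rule exI[of _ N]) (auto simp: N_eq[OF mat_apply_in_coord_space] g(3))
qed

section \<open>Base change of matrices to the algebraic closure\<close>

definition mat_bc :: "(nat \<Rightarrow> nat \<Rightarrow> 'a::field) \<Rightarrow> nat \<Rightarrow> nat \<Rightarrow> 'a alg_closure" where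
  "mat_bc M = (\<lambda>r c. to_ac (M r c))"

lemma mat_bc_mat_mult: "mat_bc (mat_mult m A B) = mat_mult m (mat_bc A) (mat_bc B)"
  by (simp add: mat_bc_def mat_mult_def to_ac_sum fun_eq_iff)

text \<open>Each linear-algebra condition in the hypotheses is witnessed by a matrix identity
  \<open>P Q + R S = 1\<close>; identities survive base change, and their consequences are then
  recovered over the algebraic closure.\<close>

definition identity_decomp :: "nat \<Rightarrow> (nat \<Rightarrow> nat \<Rightarrow> 'a::field) \<Rightarrow> nat \<Rightarrow> (nat \<Rightarrow> nat \<Rightarrow> 'a)
    \<Rightarrow> (nat \<Rightarrow> nat \<Rightarrow> 'a) \<Rightarrow> nat \<Rightarrow> (nat \<Rightarrow> nat \<Rightarrow> 'a) \<Rightarrow> bool" where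
  "identity_decomp n P m Q R m' S \<longleftrightarrow>
     (\<forall>r<n. \<forall>c<n. (\<Sum>l<m. P r l * Q l c) + (\<Sum>l<m'. R r l * S l c) = (if r = c then 1 else 0))"

lemma identity_decompI:
  assumes "\<And>c. c < n \<Longrightarrow> unit_vec c = (\<lambda>r. mat_apply P m n (q c) r + mat_apply R m' n (s c) r)"
  shows "identity_decomp n P m (\<lambda>l c. q c l) R m' (\<lambda>l c. s c l)"
  unfolding identity_decomp_def
proof (intro allI impI)
  fix r c assume "r < n" "c < n"
  then show "(\<Sum>l<m. P r l * q c l) + (\<Sum>l<m'. R r l * s c l) = (if r = c then 1 else 0)"
    using fun_cong[OF assms[of c], of r] by (simp add: mat_apply_def unit_vec_def)
qed

lemma identity_decomp_apply:
  assumes dec: "identity_decomp n P m Q R m' S" and x: "x \<in> coord_space n"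
  shows "x = (\<lambda>r. mat_apply P m n (mat_apply Q n m x) r + mat_apply R m' n (mat_apply S n m' x) r)"
proof
  fix r
  show "x r = mat_apply P m n (mat_apply Q n m x) r + mat_apply R m' n (mat_apply S n m' x) r"
  proof (cases "r < n")
    case True
    have "mat_apply P m n (mat_apply Q n m x) r + mat_apply R m' n (mat_apply S n m' x) r
        = (\<Sum>c<n. ((\<Sum>l<m. P r l * Q l c) + (\<Sum>l<m'. R r l * S l c)) * x c)"
      using True by (simp add: mat_apply_def sum_distrib_left sum_distrib_right mult.assoc
          sum.distrib distrib_right sum.swap[of _ "{..<n}"])
    also have "\<dots> = (\<Sum>c<n. if r = c then x c else 0)"
      using dec True by (intro sum.cong refl) (simp add: identity_decomp_def)
    also have "\<dots> = x r" using True by simp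
    finally show ?thesis by simp
  qed (use x in \<open>simp add: coord_space_def mat_apply_def\<close>)
qed

lemma identity_decomp_bc:
  assumes "identity_decomp n P m Q R m' S"
  shows "identity_decomp n (mat_bc P) m (mat_bc Q) (mat_bc R) m' (mat_bc S)"
  unfolding identity_decomp_def
proof (intro allI impI)
  fix r c assume rc: "r < n" "c < n"
  have "to_ac ((\<Sum>l<m. P r l * Q l c) + (\<Sum>l<m'. R r l * S l c)) = to_ac (if r = c then 1 else 0)"
    using assms rc by (simp add: identity_decomp_def)
  then show "(\<Sum>l<m. mat_bc P r l * mat_bc Q l c) + (\<Sum>l<m'. mat_bc R r l * mat_bc S l c)
      = (if r = c then 1 else 0)"
    by (cases "r = c") (simp_all add: to_ac_sum mat_bc_def)
qed

lemma identity_decomp_of_spanning: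
  fixes A B :: "nat \<Rightarrow> nat \<Rightarrow> 'a::field"
  assumes span: "\<forall>z\<in>coord_space n. \<exists>y\<in>coord_space m. \<exists>u\<in>coord_space m'.
                   z = (\<lambda>k. mat_apply A m n y k + mat_apply B m' n u k)"
  shows "\<exists>Y V. identity_decomp n A m Y B m' V"
proof -
  have "\<forall>c. \<exists>yu. c < n \<longrightarrow>
      unit_vec c = (\<lambda>k. mat_apply A m n (fst yu) k + mat_apply B m' n (snd yu) k)"
    using span unit_vec_in_coord_space by fastforce
  then obtain yu where "\<And>c. c < n \<Longrightarrow>
      unit_vec c = (\<lambda>k. mat_apply A m n (fst (yu c)) k + mat_apply B m' n (snd (yu c)) k)"
    by metis
  then have "identity_decomp n A m (\<lambda>l c. fst (yu c) l) B m' (\<lambda>l c. snd (yu c) l)"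
    by (rule identity_decompI)
  then show ?thesis by blast
qed

lemma identity_decomp_of_kernel_subset_image:
  fixes M D :: "nat \<Rightarrow> nat \<Rightarrow> 'a::field"
  assumes ker: "\<forall>x\<in>coord_space n. mat_apply M n p x = (\<lambda>_. 0) \<longrightarrow>
                  (\<exists>y\<in>coord_space m. x = mat_apply D m n y)"
  shows "\<exists>N S. identity_decomp n N p M D m S"
proof -
  obtain N where N: "\<forall>x\<in>coord_space n.
      mat_apply M n p (mat_apply N p n (mat_apply M n p x)) = mat_apply M n p x"
    using exists_generalized_inverse by blast
  define Me where "Me c = mat_apply M n p (unit_vec c)" for c
  have "\<exists>y. unit_vec c = (\<lambda>r. mat_apply N p n (Me c) r + mat_apply D m n y r)"
    if c: "c < n" for c
  proof -
    \<comment> \<open>\<open>e\<^sub>c - N M e\<^sub>c\<close> lies in the kernel of \<open>M\<close>, hence in the image of \<open>D\<close>.\<close>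
    define w where "w = (\<lambda>r. unit_vec c r - mat_apply N p n (Me c) r)"
    have "w \<in> coord_space n"
      using unit_vec_in_coord_space[OF c] mat_apply_in_coord_space[of N p n]
      by (auto simp: w_def coord_space_def)
    moreover have "mat_apply M n p w = (\<lambda>_. 0)"
      unfolding w_def mat_apply_diff Me_def using N unit_vec_in_coord_space[OF c] by auto
    ultimately obtain y where "w = mat_apply D m n y" using ker by blast
    moreover have "unit_vec c = (\<lambda>r. mat_apply N p n (Me c) r + w r)"
      by (simp add: w_def)
    ultimately show ?thesis by blast
  qed
  then obtain s where
    "\<And>c. c < n \<Longrightarrow> unit_vec c = (\<lambda>r. mat_apply N p n (Me c) r + mat_apply D m n (s c) r)"
    by metis
  then have "identity_decomp n N p (\<lambda>l c. Me c l) D m (\<lambda>l c. s c l)"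
    by (rule identity_decompI)
  then have "identity_decomp n N p M D m (\<lambda>l c. s c l)"
    by (simp add: identity_decomp_def Me_def mat_apply_unit_vec)
  then show ?thesis by blast
qed

lemma spanning_bc:
  fixes A B :: "nat \<Rightarrow> nat \<Rightarrow> 'a::field"
  assumes "\<forall>z\<in>coord_space n. \<exists>y\<in>coord_space m. \<exists>u\<in>coord_space m'.
             z = (\<lambda>k. mat_apply A m n y k + mat_apply B m' n u k)"
  shows "\<forall>z\<in>coord_space n. \<exists>y\<in>coord_space m. \<exists>u\<in>coord_space m'.
           z = (\<lambda>k. mat_apply (mat_bc A) m n y k + mat_apply (mat_bc B) m' n u k)"
proof
  obtain Y V where "identity_decomp n A m Y B m' V"
    using identity_decomp_of_spanning[OF assms] by blast
  note dec = identity_decomp_bc[OF this]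
  fix z :: "nat \<Rightarrow> 'a alg_closure" assume "z \<in> coord_space n"
  with dec show "\<exists>y\<in>coord_space m. \<exists>u\<in>coord_space m'.
      z = (\<lambda>k. mat_apply (mat_bc A) m n y k + mat_apply (mat_bc B) m' n u k)"
    using identity_decomp_apply mat_apply_in_coord_space by blast
qed

lemma kernel_subset_image_bc:
  fixes M D :: "nat \<Rightarrow> nat \<Rightarrow> 'a::field"
  assumes "\<forall>x\<in>coord_space n. mat_apply M n p x = (\<lambda>_. 0) \<longrightarrow>
             (\<exists>y\<in>coord_space m. x = mat_apply D m n y)"
  shows "\<forall>x\<in>coord_space n. mat_apply (mat_bc M) n p x = (\<lambda>_. 0) \<longrightarrow>
           (\<exists>y\<in>coord_space m. x = mat_apply (mat_bc D) m n y)"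
proof (intro ballI impI)
  obtain N S where "identity_decomp n N p M D m S"
    using identity_decomp_of_kernel_subset_image[OF assms] by blast
  note dec = identity_decomp_bc[OF this]
  fix x :: "nat \<Rightarrow> 'a alg_closure"
  assume x: "x \<in> coord_space n" and Mx: "mat_apply (mat_bc M) n p x = (\<lambda>_. 0)"
  have "x = (\<lambda>r. mat_apply (mat_bc N) p n (\<lambda>_. 0) r
                 + mat_apply (mat_bc D) m n (mat_apply (mat_bc S) n m x) r)"
    using identity_decomp_apply[OF dec x] unfolding Mx .
  then have "x = mat_apply (mat_bc D) m n (mat_apply (mat_bc S) n m x)"
    by (simp add: mat_apply_zero)
  then show "\<exists>y\<in>coord_space m. x = mat_apply (mat_bc D) m n y"
    using mat_apply_in_coord_space by blast
qed

lemma inj_on_mat_apply_bc: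
  fixes M :: "nat \<Rightarrow> nat \<Rightarrow> 'a::field"
  assumes "inj_on (mat_apply M n p) (coord_space n)"
  shows "inj_on (mat_apply (mat_bc M) n p) (coord_space n)"
proof -
  \<comment> \<open>Injectivity is the case \<open>ker M \<subseteq> Im 0\<close> of \<open>kernel_subset_image_bc\<close>.\<close>
  have kernel_trivial: "inj_on (mat_apply A n p) (coord_space n) \<longleftrightarrow>
      (\<forall>x\<in>coord_space n. mat_apply A n p x = (\<lambda>_. 0) \<longrightarrow> x = (\<lambda>_. 0))"
    for A :: "nat \<Rightarrow> nat \<Rightarrow> 'b::field"
    using module_hom.inj_on_iff_eq_0[OF linear_mat_apply[unfolded linear_iff_module_hom]
        subspace_coord_space]
    by (simp add: zero_fun_def)
  have to_zero: "mat_apply Z 0 n y = (\<lambda>_. 0)" for Z :: "nat \<Rightarrow> nat \<Rightarrow> 'b::field" and y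
    by (simp add: mat_apply_def fun_eq_iff)
  have "(\<lambda>_. 0) \<in> coord_space 0"
    by (simp add: coord_space_def)
  moreover have "\<forall>x\<in>coord_space n. mat_apply M n p x = (\<lambda>_. 0) \<longrightarrow> x = (\<lambda>_. 0)"
    using assms kernel_trivial[of M] by blast
  ultimately have "\<forall>x\<in>coord_space n. mat_apply M n p x = (\<lambda>_. 0) \<longrightarrow>
      (\<exists>y\<in>coord_space 0. x = mat_apply (\<lambda>_ _. 0) 0 n y)"
    unfolding to_zero by blast
  from kernel_subset_image_bc[OF this] show ?thesis
    unfolding kernel_trivial to_zero by blast
qed

lemma comp_zero_bc:
  fixes A B :: "nat \<Rightarrow> nat \<Rightarrow> 'a::field"
  assumes "\<forall>x\<in>coord_space n. mat_apply A m p (mat_apply B n m x) = (\<lambda>_. 0)"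
  shows "\<forall>x\<in>coord_space n. mat_apply (mat_bc A) m p (mat_apply (mat_bc B) n m x) = (\<lambda>_. 0)"
proof -
  have "mat_mult m A B r c = 0" if "r < p" "c < n" for r c
  proof -
    have "mat_apply (mat_mult m A B) n p (unit_vec c) = (\<lambda>_. 0)"
      using assms[rule_format, OF unit_vec_in_coord_space[OF that(2)]]
      by (simp only: mat_apply_mat_mult)
    from fun_cong[OF this, of r] show ?thesis using that by (simp add: mat_apply_unit_vec)
  qed
  then have zero: "mat_apply (mat_bc (mat_mult m A B)) n p = mat_apply (\<lambda>_ _. 0) n p"
    by (intro mat_apply_cong) (simp add: mat_bc_def)
  show ?thesis
    unfolding mat_apply_mat_mult mat_bc_mat_mult[symmetric] zero
    by (simp add: mat_apply_def fun_eq_iff)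
qed

lemma up_map_scale: "up_map d U i (\<lambda>n. c * x n) = (\<lambda>n. c * up_map d U i x n)"
  by (simp add: up_map_def mat_apply_scale)

lemma down_map_scale: "down_map d D i (\<lambda>n. c * x n) = (\<lambda>n. c * down_map d D i x n)"
  by (simp add: down_map_def mat_apply_scale)

lemma up_map_add: "up_map d U i (\<lambda>n. x n + y n) = (\<lambda>n. up_map d U i x n + up_map d U i y n)"
  by (simp add: up_map_def mat_apply_add)

lemma down_map_add:
  "down_map d D i (\<lambda>n. x n + y n) = (\<lambda>n. down_map d D i x n + down_map d D i y n)"
  by (simp add: down_map_def mat_apply_add)

lemma up_map_zero: "up_map d U i (\<lambda>n. 0) = (\<lambda>n. 0)"
  by (simp add: up_map_def mat_apply_zero)

lemma down_map_zero: "down_map d D i (\<lambda>n. 0) = (\<lambda>n. 0)"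
  by (simp add: down_map_def mat_apply_zero)

lemma up_map_in_cspace: "up_map d U i x \<in> cspace d (i + 1)"
  by (simp add: up_map_def cspace_eq_coord_space mat_apply_in_coord_space)

lemma down_map_in_cspace: "down_map d D i x \<in> cspace d i"
  by (simp add: down_map_def cspace_eq_coord_space mat_apply_in_coord_space)

lemma cspace_eq_zero_iff: "v \<in> cspace d i \<Longrightarrow> v = (\<lambda>n. 0) \<longleftrightarrow> (\<forall>r<d i. v r = 0)"
  by (auto simp: cspace_def fun_eq_iff) (metis not_le)

lemma colinked_down_up:
  "colinked_chain d U D \<Longrightarrow> x \<in> cspace d i \<Longrightarrow> down_map d D i (up_map d U i x) = (\<lambda>n. 0)"
  by (simp add: colinked_chain_def)

lemma colinked_up_down:
  "colinked_chain d U D \<Longrightarrow> y \<in> cspace d (i + 1) \<Longrightarrow> up_map d U i (down_map d D i y) = (\<lambda>n. 0)"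
  by (simp add: colinked_chain_def)

lemma ups_Suc_left: "ups d U i (Suc k) x = ups d U (i + 1) k (up_map d U i x)"
  by (induct k arbitrary: x) (simp_all add: algebra_simps)

lemma downs_Suc_left: "downs d D i (Suc k) x = downs d D (i - 1) k (down_map d D (i - 1) x)"
  by (induct k arbitrary: x) (simp_all add: algebra_simps)

lemma inj_on_up_map_left_of_cosupport:
  assumes "is_cosupport d U D H" "\<forall>h\<in>H. a \<le> h" "j < a"
  shows "inj_on (up_map d U j) (cspace d j)"
proof -
  obtain h where h: "h \<in> H" "inj_on (comp_map d U D j h) (cspace d j)"
    using assms(1) unfolding is_cosupport_def by blast
  have "j < h" using h(1) assms(2,3) by force
  then obtain k where "nat (h - j) = Suc k"
    by (metis gr0_implies_Suc zero_less_nat_eq diff_gt_0_iff_gt)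
  then have "comp_map d U D j h = ups d U (j + 1) k \<circ> up_map d U j"
    using \<open>j < h\<close> by (simp add: comp_map_def fun_eq_iff ups_Suc_left del: ups.simps)
  then show ?thesis using h(2) inj_on_imageI2 by metis
qed

lemma inj_on_down_map_right_of_cosupport:
  assumes "is_cosupport d U D H" "\<forall>h\<in>H. h \<le> b" "b \<le> j"
  shows "inj_on (down_map d D j) (cspace d (j + 1))"
proof -
  obtain h where h: "h \<in> H" "inj_on (comp_map d U D (j + 1) h) (cspace d (j + 1))"
    using assms(1) unfolding is_cosupport_def by blast
  have "h < j + 1" using h(1) assms(2,3) by force
  then obtain k where "nat (j + 1 - h) = Suc k"
    by (metis gr0_implies_Suc zero_less_nat_eq diff_gt_0_iff_gt)
  then have "comp_map d U D (j + 1) h = downs d D j k \<circ> down_map d D j"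
    using \<open>h < j + 1\<close> by (simp add: comp_map_def fun_eq_iff downs_Suc_left del: downs.simps)
  then show ?thesis using h(2) inj_on_imageI2 by metis
qed

lemma up_map_base_change: "up_map d (base_change U) i = mat_apply (mat_bc (U i)) (d i) (d (i + 1))"
  by (simp add: up_map_def base_change_def mat_bc_def)

lemma down_map_base_change:
  "down_map d (base_change D) i = mat_apply (mat_bc (D i)) (d (i + 1)) (d i)"
  by (simp add: down_map_def base_change_def mat_bc_def)

lemma colinked_chain_base_change:
  assumes "colinked_chain d U D"
  shows "colinked_chain d (base_change U) (base_change D)"
  unfolding colinked_chain_def up_map_base_change down_map_base_change cspace_eq_coord_space
proof (intro allI conjI)
  fix i
  show "\<forall>x\<in>coord_space (d i).
    mat_apply (mat_bc (D i)) (d (i + 1)) (d i) (mat_apply (mat_bc (U i)) (d i) (d (i + 1)) x)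
      = (\<lambda>n. 0)"
    using assms by (intro comp_zero_bc) (simp add: colinked_chain_def up_map_def down_map_def
        cspace_eq_coord_space)
  show "\<forall>y\<in>coord_space (d (i + 1)).
    mat_apply (mat_bc (U i)) (d i) (d (i + 1)) (mat_apply (mat_bc (D i)) (d (i + 1)) (d i) y)
      = (\<lambda>n. 0)"
    using assms by (intro comp_zero_bc) (simp add: colinked_chain_def up_map_def down_map_def
        cspace_eq_coord_space)
  show "\<forall>z\<in>coord_space (d i). \<exists>y\<in>coord_space (d (i + 1)). \<exists>u\<in>coord_space (d (i - 1)).
    z = (\<lambda>n. mat_apply (mat_bc (D i)) (d (i + 1)) (d i) y n
           + mat_apply (mat_bc (U (i - 1))) (d (i - 1)) (d (i - 1 + 1)) u n)"
    using assms spanning_bc[of "d i" "d (i + 1)" "d (i - 1)" "D i" "U (i - 1)"]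
    by (simp add: colinked_chain_def up_map_def down_map_def cspace_eq_coord_space)
qed

lemma exact_rep_base_change_kernel_up_map:
  assumes "exact_rep d U D" "x \<in> cspace d i" "up_map d (base_change U) i x = (\<lambda>_. 0)"
  shows "x \<in> down_map d (base_change D) i ` cspace d (i + 1)"
proof -
  have "\<forall>x\<in>coord_space (d i). mat_apply (U i) (d i) (d (i + 1)) x = (\<lambda>_. 0) \<longrightarrow>
          (\<exists>y\<in>coord_space (d (i + 1)). x = mat_apply (D i) (d (i + 1)) (d i) y)"
    using assms(1) unfolding exact_rep_def exact_on_def
    by (auto simp: up_map_def down_map_def cspace_eq_coord_space set_eq_iff image_iff)
  from kernel_subset_image_bc[OF this] show ?thesis
    using assms(2,3) by (auto simp: up_map_base_change down_map_base_change cspace_eq_coord_space)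
qed

lemma inj_on_up_map_base_change:
  "inj_on (up_map d U i) (cspace d i) \<Longrightarrow> inj_on (up_map d (base_change U) i) (cspace d i)"
  unfolding up_map_base_change by (simp add: up_map_def cspace_eq_coord_space inj_on_mat_apply_bc)

lemma inj_on_down_map_base_change:
  "inj_on (down_map d D i) (cspace d (i + 1)) \<Longrightarrow>
   inj_on (down_map d (base_change D) i) (cspace d (i + 1))"
  unfolding down_map_base_change
  by (simp add: down_map_def cspace_eq_coord_space inj_on_mat_apply_bc)

definition line_of :: "(nat \<Rightarrow> 'a::field) \<Rightarrow> (nat \<Rightarrow> 'a) set" where
  "line_of x = {(\<lambda>n. c * x n) | c. True}"

lemma mem_line_of_iff: "y \<in> line_of x \<longleftrightarrow> (\<exists>c. y = (\<lambda>n. c * x n))"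
  unfolding line_of_def by auto

lemma line_ofE: "y \<in> line_of x \<Longrightarrow> (\<And>c. y = (\<lambda>n. c * x n) \<Longrightarrow> P) \<Longrightarrow> P"
  unfolding line_of_def by blast

lemma scaled_in_line_of: "(\<lambda>n. c * x n) \<in> line_of x"
  unfolding line_of_def by blast

lemma self_in_line_of: "x \<in> line_of x"
  using scaled_in_line_of[of 1 x] by simp

lemma zero_in_line_of: "(\<lambda>n. 0) \<in> line_of x"
  using scaled_in_line_of[of 0 x] by simp

lemma line_of_scale: "y \<in> line_of x \<Longrightarrow> (\<lambda>n. c * y n) \<in> line_of x"
  by (auto simp: mem_line_of_iff mult.assoc[symmetric])

lemma line_of_eq:
  assumes "y \<in> line_of x" "y \<noteq> (\<lambda>n. 0)"
  shows "line_of y = line_of x"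
proof
  show "line_of y \<subseteq> line_of x"
    using line_of_scale[OF assms(1)] by (auto simp: mem_line_of_iff[of _ y])
  obtain c where c: "y = (\<lambda>n. c * x n)" using assms(1) by (rule line_ofE)
  with assms(2) have "c \<noteq> 0" by auto
  with c have "x = (\<lambda>n. inverse c * y n)" by (simp add: fun_eq_iff)
  then have "x \<in> line_of y" by (simp add: scaled_in_line_of)
  then show "line_of x \<subseteq> line_of y"
    using line_of_scale by (auto simp: mem_line_of_iff[of _ x])
qed

lemma image_line_of_subset:
  assumes "\<And>c x. h (\<lambda>n. c * x n) = (\<lambda>n. c * h x n)" "h v \<in> line_of w"
  shows "h ` line_of v \<subseteq> line_of w"
proof
  fix u assume "u \<in> h ` line_of v"
  then obtain c where "u = h (\<lambda>n. c * v n)" by (auto simp: mem_line_of_iff)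
  then show "u \<in> line_of w" using assms line_of_scale by simp
qed

lemma homogeneous_vanishes_on_line_of:
  assumes "\<And>c x. h (\<lambda>n. c * x n) = (\<lambda>n. c * h x n)"
  shows "(\<forall>u\<in>line_of x. h u = (\<lambda>n. 0)) \<longleftrightarrow> h x = (\<lambda>n. 0)"
proof
  show "\<forall>u\<in>line_of x. h u = (\<lambda>n. 0) \<Longrightarrow> h x = (\<lambda>n. 0)" using self_in_line_of by blast
  show "h x = (\<lambda>n. 0) \<Longrightarrow> \<forall>u\<in>line_of x. h u = (\<lambda>n. 0)" by (auto simp: mem_line_of_iff assms)
qed

lemma is_line_iff: "is_line d i L \<longleftrightarrow> (\<exists>x\<in>cspace d i. x \<noteq> (\<lambda>n. 0) \<and> L = line_of x)"
  by (simp add: is_line_def line_of_def)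

lemma is_line_line_of: "x \<in> cspace d i \<Longrightarrow> x \<noteq> (\<lambda>n. 0) \<Longrightarrow> is_line d i (line_of x)"
  by (auto simp: is_line_iff)

lemma is_line_eq_line_of:
  assumes "is_line d i L" "y \<in> L" "y \<noteq> (\<lambda>n. 0)"
  shows "L = line_of y"
  using assms line_of_eq unfolding is_line_iff by metis

lemma is_line_nonzero: "is_line d i L \<Longrightarrow> \<exists>y\<in>L. y \<noteq> (\<lambda>n. 0)"
  unfolding is_line_iff using self_in_line_of by blast

lemma is_line_subset_cspace: "is_line d i L \<Longrightarrow> L \<subseteq> cspace d i"
  by (force simp: is_line_iff mem_line_of_iff cspace_def)

lemma is_line_scale: "is_line d i L \<Longrightarrow> y \<in> L \<Longrightarrow> (\<lambda>n. c * y n) \<in> L"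
  unfolding is_line_iff using line_of_scale by blast

section \<open>Exactness and zero links\<close>

definition zero_link :: "(int \<Rightarrow> nat) \<Rightarrow> (int \<Rightarrow> nat \<Rightarrow> nat \<Rightarrow> 'a::field) \<Rightarrow> (int \<Rightarrow> nat \<Rightarrow> nat \<Rightarrow> 'a)
    \<Rightarrow> (int \<Rightarrow> (nat \<Rightarrow> 'a) set) \<Rightarrow> int \<Rightarrow> bool" where
  "zero_link d U D W i \<longleftrightarrow>
     (\<forall>x\<in>W i. up_map d U i x = (\<lambda>n. 0)) \<and> (\<forall>y\<in>W (i + 1). down_map d D i y = (\<lambda>n. 0))"

lemma LP_is_line: "W \<in> LP d U D \<Longrightarrow> is_line d i (W i)"
  by (simp add: LP_def)

lemma LP_up_map: "W \<in> LP d U D \<Longrightarrow> x \<in> W i \<Longrightarrow> up_map d U i x \<in> W (i + 1)"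
  unfolding LP_def image_subset_iff by blast

lemma LP_down_map: "W \<in> LP d U D \<Longrightarrow> y \<in> W (i + 1) \<Longrightarrow> down_map d D i y \<in> W i"
  unfolding LP_def image_subset_iff by blast

lemma LP_representative: "W \<in> LP d U D \<Longrightarrow> \<exists>x. \<forall>i. x i \<in> W i \<and> x i \<noteq> (\<lambda>n. 0)"
  using is_line_nonzero[OF LP_is_line] by metis

lemma zero_link_line_of:
  "W i = line_of x \<Longrightarrow> W (i + 1) = line_of y \<Longrightarrow>
   zero_link d U D W i \<longleftrightarrow> up_map d U i x = (\<lambda>n. 0) \<and> down_map d D i y = (\<lambda>n. 0)"
  unfolding zero_link_def
  by (simp add: homogeneous_vanishes_on_line_of[OF up_map_scale]
      homogeneous_vanishes_on_line_of[OF down_map_scale])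

lemma zero_link_iff:
  assumes W: "W \<in> LP d U D"
    and x: "x \<in> W i" "x \<noteq> (\<lambda>n. 0)" and y: "y \<in> W (i + 1)" "y \<noteq> (\<lambda>n. 0)"
  shows "zero_link d U D W i \<longleftrightarrow> up_map d U i x = (\<lambda>n. 0) \<and> down_map d D i y = (\<lambda>n. 0)"
proof -
  have "W i = line_of x" "W (i + 1) = line_of y"
    using is_line_eq_line_of[OF LP_is_line[OF W]] x y by blast+
  then show ?thesis by (rule zero_link_line_of)
qed

lemma exact_at_line_pair:
  fixes f g :: "(nat \<Rightarrow> 'a::field) \<Rightarrow> (nat \<Rightarrow> 'a)"
  assumes A: "A = line_of a" and B: "B = line_of b" and fA: "f ` A \<subseteq> B" and gB: "g ` B \<subseteq> A"
    and f_scale: "\<And>c x. f (\<lambda>n. c * x n) = (\<lambda>n. c * f x n)"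
    and g_scale: "\<And>c x. g (\<lambda>n. c * x n) = (\<lambda>n. c * g x n)"
    and gf: "\<forall>x\<in>A. g (f x) = (\<lambda>n. 0)" and fa: "f a \<noteq> (\<lambda>n. 0)"
  shows "{x\<in>A. f x = (\<lambda>n. 0)} = g ` B \<and> {y\<in>B. g y = (\<lambda>n. 0)} = f ` A"
proof -
  have "f a \<in> B" using fA A self_in_line_of by blast
  then have B': "B = line_of (f a)" using line_of_eq fa B by blast
  have gfa: "g (f a) = (\<lambda>n. 0)" using gf A self_in_line_of by blast
  have "g ` B \<subseteq> {(\<lambda>n. 0)}" unfolding B' by (auto simp: mem_line_of_iff g_scale gfa)
  moreover have "(\<lambda>n. 0) \<in> g ` B" using gfa \<open>f a \<in> B\<close> by (metis image_eqI)
  ultimately have g_B: "g ` B = {(\<lambda>n. 0)}" by blast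
  have f_zero: "f (\<lambda>n. c * a n) = (\<lambda>n. 0) \<longleftrightarrow> c = 0" for c
    using fa by (auto simp: f_scale fun_eq_iff)
  have "{x\<in>A. f x = (\<lambda>n. 0)} = {(\<lambda>n. 0)}"
  proof (intro equalityI subsetI)
    fix x assume "x \<in> {x\<in>A. f x = (\<lambda>n. 0)}"
    then obtain c where "x = (\<lambda>n. c * a n)" "c = 0" using f_zero by (auto simp: A mem_line_of_iff)
    then show "x \<in> {(\<lambda>n. 0)}" by simp
  qed (use f_zero[of 0] zero_in_line_of A in simp)
  moreover have "f ` A = B"
  proof
    show "f ` A \<subseteq> B" by (rule fA)
    have "f (\<lambda>n. c * a n) \<in> f ` A" for c unfolding A by (intro imageI scaled_in_line_of)
    then show "B \<subseteq> f ` A" by (auto simp: B' mem_line_of_iff f_scale)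
  qed
  ultimately show ?thesis using g_B by auto
qed

lemma exact_at_nonzero_link:
  assumes col: "colinked_chain d U D" and W: "W \<in> LP d U D" and nz: "\<not> zero_link d U D W i"
  shows "{x \<in> W i. up_map d U i x = (\<lambda>n. 0)} = down_map d D i ` W (i + 1) \<and>
         {y \<in> W (i + 1). down_map d D i y = (\<lambda>n. 0)} = up_map d U i ` W i"
proof -
  obtain x where x: "x \<in> W i" "x \<noteq> (\<lambda>n. 0)" using is_line_nonzero[OF LP_is_line[OF W]] by blast
  obtain y where y: "y \<in> W (i + 1)" "y \<noteq> (\<lambda>n. 0)"
    using is_line_nonzero[OF LP_is_line[OF W]] by blast
  have Wx: "W i = line_of x" and Wy: "W (i + 1) = line_of y"
    using is_line_eq_line_of[OF LP_is_line[OF W]] x y by blast+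
  have up: "up_map d U i ` W i \<subseteq> W (i + 1)" and down: "down_map d D i ` W (i + 1) \<subseteq> W i"
    using LP_up_map[OF W] LP_down_map[OF W] by auto
  have down_up: "\<forall>x\<in>W i. down_map d D i (up_map d U i x) = (\<lambda>n. 0)"
    using colinked_down_up[OF col] is_line_subset_cspace[OF LP_is_line[OF W]] by blast
  have up_down: "\<forall>y\<in>W (i + 1). up_map d U i (down_map d D i y) = (\<lambda>n. 0)"
    using colinked_up_down[OF col] is_line_subset_cspace[OF LP_is_line[OF W]] by blast
  have "up_map d U i x \<noteq> (\<lambda>n. 0) \<or> down_map d D i y \<noteq> (\<lambda>n. 0)"
    using nz zero_link_iff[OF W x y] by blast
  then show ?thesis
  proof
    assume "up_map d U i x \<noteq> (\<lambda>n. 0)"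
    then show ?thesis
      by (rule exact_at_line_pair[OF Wx Wy up down up_map_scale down_map_scale down_up])
  next
    assume "down_map d D i y \<noteq> (\<lambda>n. 0)"
    then show ?thesis
      using exact_at_line_pair[OF Wy Wx down up down_map_scale up_map_scale up_down] by blast
  qed
qed

lemma exact_on_iff_no_zero_link:
  assumes col: "colinked_chain d U D" and W: "W \<in> LP d U D"
  shows "exact_on W (up_map d U) (down_map d D) \<longleftrightarrow> (\<forall>i. \<not> zero_link d U D W i)"
proof
  assume ex: "exact_on W (up_map d U) (down_map d D)"
  show "\<forall>i. \<not> zero_link d U D W i"
  proof (intro allI notI)
    fix i assume zl: "zero_link d U D W i"
    obtain x where x: "x \<in> W i" "x \<noteq> (\<lambda>n. 0)" using is_line_nonzero[OF LP_is_line[OF W]] by blast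
    have "x \<in> down_map d D i ` W (i + 1)"
      using ex x zl unfolding exact_on_def zero_link_def by blast
    then show False using x(2) zl by (auto simp: zero_link_def)
  qed
next
  assume "\<forall>i. \<not> zero_link d U D W i"
  then show "exact_on W (up_map d U) (down_map d D)"
    unfolding exact_on_def using exact_at_nonzero_link[OF col W] by blast
qed

lemma zero_link_within:
  assumes W: "W \<in> LP d U D" and zl: "zero_link d U D W i"
    and inj_right: "\<forall>j\<ge>b. inj_on (down_map d D j) (cspace d (j + 1))"
    and inj_left: "\<forall>j<a. inj_on (up_map d U j) (cspace d j)"
  shows "a \<le> i \<and> i < b"
proof (rule ccontr)
  have zero_in: "(\<lambda>n. 0) \<in> cspace d j" for j by (simp add: cspace_def)
  obtain x where x: "x \<in> W i" "x \<noteq> (\<lambda>n. 0)" using is_line_nonzero[OF LP_is_line[OF W]] by blast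
  obtain y where y: "y \<in> W (i + 1)" "y \<noteq> (\<lambda>n. 0)"
    using is_line_nonzero[OF LP_is_line[OF W]] by blast
  have "x \<in> cspace d i" "y \<in> cspace d (i + 1)"
    using x y is_line_subset_cspace[OF LP_is_line[OF W]] by blast+
  moreover have "up_map d U i x = up_map d U i (\<lambda>n. 0)" "down_map d D i y = down_map d D i (\<lambda>n. 0)"
    using zl x y by (simp_all add: zero_link_def up_map_zero down_map_zero)
  moreover assume "\<not> (a \<le> i \<and> i < b)"
  ultimately show False
    using inj_left inj_right x(2) y(2) zero_in by (metis inj_onD not_le)
qed

lemma polyfun_sum:
  "finite I \<Longrightarrow> (\<And>k. k \<in> I \<Longrightarrow> f k \<in> polyfun H d) \<Longrightarrow> (\<lambda>x. \<Sum>k\<in>I. f k x) \<in> polyfun H d"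
  by (induct I rule: finite_induct) (auto intro: pf_const pf_add)

lemma polyfun_cong:
  "f \<in> polyfun H d \<Longrightarrow> (\<And>i n. i \<in> H \<Longrightarrow> n < d i \<Longrightarrow> x i n = y i n) \<Longrightarrow> f x = f y"
  by (induct f rule: polyfun.induct) auto

lemma polyfun_along_line:
  fixes A B :: "int \<Rightarrow> nat \<Rightarrow> 'a::field"
  assumes "f \<in> polyfun H d"
  shows "\<exists>p. \<forall>t. f (\<lambda>i n. A i n + t * B i n) = poly p t"
  using assms
proof (induct f rule: polyfun.induct)
  case (pf_const c) show ?case by (intro exI[of _ "[:c:]"]) simp
next
  case (pf_var i n) show ?case by (intro exI[of _ "[:A i n, B i n:]"]) simp
next
  case (pf_add f g)
  then obtain p q where "\<forall>t. f (\<lambda>i n. A i n + t * B i n) = poly p t"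
    "\<forall>t. g (\<lambda>i n. A i n + t * B i n) = poly q t" by blast
  then show ?case by (intro exI[of _ "p + q"]) simp
next
  case (pf_mult f g)
  then obtain p q where "\<forall>t. f (\<lambda>i n. A i n + t * B i n) = poly p t"
    "\<forall>t. g (\<lambda>i n. A i n + t * B i n) = poly q t" by blast
  then show ?case by (intro exI[of _ "p * q"]) simp
qed

lemma multihom_mat_apply_coord:
  assumes "finite H" "i \<in> H" "r < p"
  shows "multihom H d (\<lambda>x. mat_apply M (d i) p (x i) r)"
  unfolding multihom_def
proof
  have "(\<lambda>x. mat_apply M (d i) p (x i) r) = (\<lambda>x. \<Sum>c<d i. M r c * x i c)"
    using assms(3) by (simp add: mat_apply_def fun_eq_iff)
  also have "\<dots> \<in> polyfun H d"
    by (rule polyfun_sum) (auto intro!: pf_mult pf_const pf_var assms(2))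
  finally show "(\<lambda>x. mat_apply M (d i) p (x i) r) \<in> polyfun H d" .
  have deg: "(\<Prod>j\<in>H. t j ^ (if j = i then 1 else 0)) = t i" for t :: "int \<Rightarrow> 'a"
    using assms(1,2) by (simp add: if_distrib[of "\<lambda>e. t _ ^ e"] prod.delta cong: if_cong)
  show "\<exists>e. \<forall>x (t :: int \<Rightarrow> 'a). (\<forall>i\<in>H. t i \<noteq> 0) \<longrightarrow>
      mat_apply M (d i) p (\<lambda>n. t i * x i n) r = (\<Prod>i\<in>H. t i ^ e i) * mat_apply M (d i) p (x i) r"
    by (rule exI[of _ "\<lambda>j. if j = i then 1 else 0"]) (simp add: deg mat_apply_scale)
qed

lemma multihom_mult:
  assumes "multihom H d f" "multihom H d g"
  shows "multihom H d (\<lambda>x. f x * g x)"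
proof -
  obtain e1 where e1: "\<And>x (t :: int \<Rightarrow> 'a). \<forall>i\<in>H. t i \<noteq> 0 \<Longrightarrow>
      f (\<lambda>i n. t i * x i n) = (\<Prod>i\<in>H. t i ^ e1 i) * f x"
    using assms(1) unfolding multihom_def by blast
  obtain e2 where e2: "\<And>x (t :: int \<Rightarrow> 'a). \<forall>i\<in>H. t i \<noteq> 0 \<Longrightarrow>
      g (\<lambda>i n. t i * x i n) = (\<Prod>i\<in>H. t i ^ e2 i) * g x"
    using assms(2) unfolding multihom_def by blast
  show ?thesis unfolding multihom_def
  proof (intro conjI exI[of _ "\<lambda>i. e1 i + e2 i"] allI impI)
    show "(\<lambda>x. f x * g x) \<in> polyfun H d" using assms pf_mult unfolding multihom_def by blast
    fix x and t :: "int \<Rightarrow> 'a" assume "\<forall>i\<in>H. t i \<noteq> 0"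
    then show "f (\<lambda>i n. t i * x i n) * g (\<lambda>i n. t i * x i n)
        = (\<Prod>i\<in>H. t i ^ (e1 i + e2 i)) * (f x * g x)"
      using e1 e2 by (simp add: power_add prod.distrib algebra_simps)
  qed
qed

lemma multihom_prod:
  "finite I \<Longrightarrow> (\<And>k. k \<in> I \<Longrightarrow> multihom H d (g k)) \<Longrightarrow> multihom H d (\<lambda>x. \<Prod>k\<in>I. g k x)"
proof (induct I rule: finite_induct)
  case empty
  show ?case unfolding multihom_def by (auto intro: pf_const exI[of _ "\<lambda>i. 0"])
next
  case (insert a F)
  then show ?case using multihom_mult[of H d "g a" "\<lambda>x. \<Prod>k\<in>F. g k x"] by simp
qed

definition vanishes_on :: "int set \<Rightarrow> ((int \<Rightarrow> nat \<Rightarrow> 'a::field) \<Rightarrow> 'a) \<Rightarrow> (int \<Rightarrow> (nat \<Rightarrow> 'a) set)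
    \<Rightarrow> bool" where
  "vanishes_on H f W \<longleftrightarrow> (\<forall>x. (\<forall>i\<in>H. x i \<in> W i \<and> x i \<noteq> (\<lambda>n. 0)) \<longrightarrow> f x = 0)"

lemma vanishes_onD: "vanishes_on H f W \<Longrightarrow> \<forall>i\<in>H. x i \<in> W i \<and> x i \<noteq> (\<lambda>n. 0) \<Longrightarrow> f x = 0"
  unfolding vanishes_on_def by blast

lemma zariski_closed_in_iff:
  "zariski_closed_in H d P C \<longleftrightarrow>
     (\<exists>F. (\<forall>f\<in>F. multihom H d f) \<and> C = {W\<in>P. \<forall>f\<in>F. vanishes_on H f W})"
  by (simp add: zariski_closed_in_def vanishes_on_def)

lemma vanishes_on_if_zero_at_representative:
  fixes A :: "int \<Rightarrow> nat \<Rightarrow> 'a::field"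
  assumes f: "multihom H d f" and lines: "\<And>i. is_line d i (W i)"
    and A: "\<forall>i\<in>H. A i \<in> W i \<and> A i \<noteq> (\<lambda>n. 0)" and fA: "f A = 0"
  shows "vanishes_on H f W"
  unfolding vanishes_on_def
proof (intro allI impI)
  fix x assume x: "\<forall>i\<in>H. x i \<in> W i \<and> x i \<noteq> (\<lambda>n. 0)"
  obtain e where e: "\<And>x (t :: int \<Rightarrow> 'a). \<forall>i\<in>H. t i \<noteq> 0 \<Longrightarrow>
      f (\<lambda>i n. t i * x i n) = (\<Prod>i\<in>H. t i ^ e i) * f x"
    using f unfolding multihom_def by blast
  have "\<forall>i\<in>H. \<exists>c. x i = (\<lambda>n. c * A i n)"
  proof
    fix i assume "i \<in> H"
    then have "W i = line_of (A i)" using is_line_eq_line_of[OF lines] A by blast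
    then have "x i \<in> line_of (A i)" using x \<open>i \<in> H\<close> by blast
    then show "\<exists>c. x i = (\<lambda>n. c * A i n)" by (simp add: mem_line_of_iff)
  qed
  from bchoice[OF this] obtain t where t: "\<forall>i\<in>H. x i = (\<lambda>n. t i * A i n)" ..
  have "\<forall>i\<in>H. t i \<noteq> 0"
  proof (intro ballI notI)
    fix i assume "i \<in> H" "t i = 0"
    then have "x i = (\<lambda>n. 0)" using t by simp
    with x \<open>i \<in> H\<close> show False by blast
  qed
  from e[OF this] have "f (\<lambda>i n. t i * A i n) = 0" using fA by simp
  moreover have "f x = f (\<lambda>i n. t i * A i n)"
    using f t by (intro polyfun_cong[of f H d]) (simp_all add: multihom_def)
  ultimately show "f x = 0" by simp
qed

lemma infinite_UNIV_alg_closed: "infinite (UNIV :: 'a::alg_closed_field set)"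
proof
  assume fin: "finite (UNIV :: 'a set)"
  \<comment> \<open>\<open>1 + \<Prod>\<^sub>a (X - a)\<close> has no root.\<close>
  define P :: "'a poly" where "P = (\<Prod>a\<in>UNIV. [:-a, 1:])"
  have "degree P = (\<Sum>a\<in>(UNIV :: 'a set). degree [:-a, 1:])"
    unfolding P_def by (rule degree_prod_eq_sum_degree) auto
  also have "\<dots> = card (UNIV :: 'a set)" by simp
  also have "\<dots> > 0" using fin by (simp add: card_gt_0_iff)
  finally have "degree (P + 1) > 0" by (simp add: degree_add_eq_left)
  then obtain x where "poly (P + 1) x = 0" using alg_closed_imp_poly_has_root by blast
  moreover have "poly P x = 0"
    unfolding P_def poly_prod using fin by (auto simp: prod_zero_iff intro: bexI[of _ x])
  ultimately show False by simp
qed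

lemma poly_eq_0_if_cofinite_roots:
  fixes p :: "'a::field poly"
  assumes "infinite (UNIV :: 'a set)" "finite Z" "\<And>t. t \<notin> Z \<Longrightarrow> poly p t = 0"
  shows "p = 0"
proof (rule ccontr)
  assume "p \<noteq> 0"
  then have "finite {t. poly p t = 0}" by (rule poly_roots_finite)
  moreover have "UNIV \<subseteq> Z \<union> {t. poly p t = 0}" using assms(3) by blast
  ultimately show False using assms(1,2) by (metis finite_Un finite_subset)
qed

lemma finite_zeros_affine_line:
  fixes y z :: "nat \<Rightarrow> 'a::field"
  assumes "y \<noteq> (\<lambda>n. 0)"
  shows "finite {t. (\<lambda>n. y n + t * z n) = (\<lambda>n. 0)}" (is "finite ?Z")
proof (cases "?Z = {}")
  case False
  then obtain s where s: "(\<lambda>n. y n + s * z n) = (\<lambda>n. 0)" by blast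
  have "t = s" if t: "(\<lambda>n. y n + t * z n) = (\<lambda>n. 0)" for t
  proof (rule ccontr)
    assume "t \<noteq> s"
    have "z n = 0" for n
    proof -
      have "t * z n = s * z n"
        using fun_cong[OF s, of n] fun_cong[OF t, of n] by (metis add_left_cancel)
      then have "(t - s) * z n = 0" by (simp add: left_diff_distrib)
      with \<open>t \<noteq> s\<close> show ?thesis by simp
    qed
    with s assms show False by simp
  qed
  then have "?Z \<subseteq> {s}" by blast
  then show ?thesis by (rule finite_subset) simp
qed simp

section \<open>Openness\<close>

definition link_forms :: "(int \<Rightarrow> nat) \<Rightarrow> (int \<Rightarrow> nat \<Rightarrow> nat \<Rightarrow> 'a::field) \<Rightarrow> (int \<Rightarrow> nat \<Rightarrow> nat \<Rightarrow> 'a)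
    \<Rightarrow> int \<Rightarrow> ((int \<Rightarrow> nat \<Rightarrow> 'a) \<Rightarrow> 'a) set" where
  "link_forms d U D i = (\<lambda>r x. up_map d U i (x i) r) ` {..<d (i + 1)}
                       \<union> (\<lambda>s x. down_map d D i (x (i + 1)) s) ` {..<d i}"

lemma link_forms_vanish_iff:
  "(\<forall>g\<in>link_forms d U D i. g x = 0) \<longleftrightarrow>
     up_map d U i (x i) = (\<lambda>n. 0) \<and> down_map d D i (x (i + 1)) = (\<lambda>n. 0)"
  using cspace_eq_zero_iff[OF up_map_in_cspace, of d U i "x i"]
    cspace_eq_zero_iff[OF down_map_in_cspace, of d D i "x (i + 1)"]
  by (auto simp: link_forms_def)

lemma link_forms_multihom:
  "i \<in> {a..<b} \<Longrightarrow> g \<in> link_forms d U D i \<Longrightarrow> multihom {a..b} d g"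
  using multihom_mat_apply_coord[of "{a..b}" i _ "d (i + 1)" d "U i"]
    multihom_mat_apply_coord[of "{a..b}" "i + 1" _ "d i" d "D i"]
  by (auto simp: link_forms_def up_map_def down_map_def)

text \<open>A point is non-exact iff some link in \<open>[a, b)\<close> is zero, i.e. iff every product over
  \<open>i \<in> [a, b)\<close> of one link form at each \<open>i\<close> vanishes on it.\<close>

definition link_products :: "(int \<Rightarrow> nat) \<Rightarrow> (int \<Rightarrow> nat \<Rightarrow> nat \<Rightarrow> 'a::field) \<Rightarrow> (int \<Rightarrow> nat \<Rightarrow> nat \<Rightarrow> 'a)
    \<Rightarrow> int \<Rightarrow> int \<Rightarrow> ((int \<Rightarrow> nat \<Rightarrow> 'a) \<Rightarrow> 'a) set" where
  "link_products d U D a b =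
     {(\<lambda>x. \<Prod>i\<in>{a..<b}. g i x) | g. \<forall>i\<in>{a..<b}. g i \<in> link_forms d U D i}"

lemma link_products_multihom: "f \<in> link_products d U D a b \<Longrightarrow> multihom {a..b} d f"
proof -
  assume "f \<in> link_products d U D a b"
  then obtain g where g: "\<forall>i\<in>{a..<b}. g i \<in> link_forms d U D i"
    and f: "f = (\<lambda>x. \<Prod>i\<in>{a..<b}. g i x)"
    unfolding link_products_def by blast
  have "multihom {a..b} d (g i)" if "i \<in> {a..<b}" for i
    using g that link_forms_multihom by blast
  then show "multihom {a..b} d f" unfolding f by (intro multihom_prod) auto
qed

lemma link_products_vanish_at_zero_link:
  assumes W: "W \<in> LP d U D" and zl: "zero_link d U D W i" and i: "i \<in> {a..<b}"
    and f: "f \<in> link_products d U D a b"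
  shows "vanishes_on {a..b} f W"
  unfolding vanishes_on_def
proof (intro allI impI)
  fix x assume x: "\<forall>i\<in>{a..b}. x i \<in> W i \<and> x i \<noteq> (\<lambda>n. 0)"
  obtain g where g: "\<forall>i\<in>{a..<b}. g i \<in> link_forms d U D i" and f: "f = (\<lambda>x. \<Prod>i\<in>{a..<b}. g i x)"
    using f unfolding link_products_def by blast
  have "x i \<in> W i" "x i \<noteq> (\<lambda>n. 0)" "x (i + 1) \<in> W (i + 1)" "x (i + 1) \<noteq> (\<lambda>n. 0)"
    using x i by auto
  from zero_link_iff[OF W this] zl
  have "up_map d U i (x i) = (\<lambda>n. 0) \<and> down_map d D i (x (i + 1)) = (\<lambda>n. 0)" by simp
  then have "g i x = 0" using link_forms_vanish_iff g i by blast
  then show "f x = 0" using i by (auto simp: f prod_zero_iff)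
qed

lemma link_product_nonvanishing:
  assumes W: "W \<in> LP d U D" and no_zl: "\<forall>i. \<not> zero_link d U D W i"
  shows "\<exists>f\<in>link_products d U D a b. \<not> vanishes_on {a..b} f W"
proof -
  obtain x where x: "\<forall>i. x i \<in> W i \<and> x i \<noteq> (\<lambda>n. 0)" using LP_representative[OF W] by blast
  have "\<exists>g\<in>link_forms d U D i. g x \<noteq> 0" for i
    using zero_link_iff[OF W, of "x i" i "x (i + 1)"] x no_zl link_forms_vanish_iff[of d U D i x]
    by blast
  then obtain g where g: "\<And>i. g i \<in> link_forms d U D i \<and> g i x \<noteq> 0" by metis
  have "(\<lambda>x. \<Prod>i\<in>{a..<b}. g i x) \<in> link_products d U D a b"
    unfolding link_products_def using g by (intro CollectI exI[of _ g]) simp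
  moreover have "\<not> vanishes_on {a..b} (\<lambda>x. \<Prod>i\<in>{a..<b}. g i x) W"
    unfolding vanishes_on_def using x g by auto
  ultimately show ?thesis by blast
qed

lemma not_exact_iff_link_products_vanish:
  fixes U D :: "int \<Rightarrow> nat \<Rightarrow> nat \<Rightarrow> 'a::field"
  assumes col: "colinked_chain d U D"
    and inj_right: "\<forall>j\<ge>b. inj_on (down_map d D j) (cspace d (j + 1))"
    and inj_left: "\<forall>j<a. inj_on (up_map d U j) (cspace d j)"
    and W: "W \<in> LP d U D"
  shows "W \<notin> LP_exact d U D \<longleftrightarrow> (\<forall>f\<in>link_products d U D a b. vanishes_on {a..b} f W)"
proof
  assume "W \<notin> LP_exact d U D"
  then obtain i where zl: "zero_link d U D W i"
    using W exact_on_iff_no_zero_link[OF col W] by (auto simp: LP_exact_def)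
  moreover have "i \<in> {a..<b}" using zero_link_within[OF W zl inj_right inj_left] by simp
  ultimately show "\<forall>f\<in>link_products d U D a b. vanishes_on {a..b} f W"
    using link_products_vanish_at_zero_link[OF W] by blast
next
  assume van: "\<forall>f\<in>link_products d U D a b. vanishes_on {a..b} f W"
  show "W \<notin> LP_exact d U D"
  proof
    assume "W \<in> LP_exact d U D"
    then have "\<forall>i. \<not> zero_link d U D W i"
      using exact_on_iff_no_zero_link[OF col W] by (simp add: LP_exact_def)
    then obtain f where "f \<in> link_products d U D a b" "\<not> vanishes_on {a..b} f W"
      using link_product_nonvanishing[OF W] by blast
    with van show False by blast
  qed
qed

lemma zariski_open_LP_exact:
  fixes U D :: "int \<Rightarrow> nat \<Rightarrow> nat \<Rightarrow> 'a::field"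
  assumes col: "colinked_chain d U D"
    and inj_right: "\<forall>j\<ge>b. inj_on (down_map d D j) (cspace d (j + 1))"
    and inj_left: "\<forall>j<a. inj_on (up_map d U j) (cspace d j)"
  shows "zariski_open_in {a..b} d (LP d U D) (LP_exact d U D)"
  unfolding zariski_open_in_def zariski_closed_in_iff
proof (intro conjI exI[of _ "link_products d U D a b"])
  show "LP_exact d U D \<subseteq> LP d U D" by (auto simp: LP_exact_def)
  show "\<forall>f\<in>link_products d U D a b. multihom {a..b} d f" using link_products_multihom by blast
  show "LP d U D - LP_exact d U D
      = {W\<in>LP d U D. \<forall>f\<in>link_products d U D a b. vanishes_on {a..b} f W}"
    using not_exact_iff_link_products_vanish[OF col inj_right inj_left] by blast
qed

section \<open>Density\<close>

definition down_image :: "(int \<Rightarrow> nat) \<Rightarrow> (int \<Rightarrow> nat \<Rightarrow> nat \<Rightarrow> 'a::field) \<Rightarrow> int \<Rightarrow> (nat \<Rightarrow> 'a) set"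
  where "down_image d D j = down_map d D j ` cspace d (j + 1)"

lemma zero_in_down_image: "(\<lambda>n. 0) \<in> down_image d D j"
  unfolding down_image_def
  by (rule image_eqI[of _ _ "\<lambda>n. 0"]) (simp_all add: down_map_zero cspace_def)

lemma up_map_down_image:
  "colinked_chain d U D \<Longrightarrow> z \<in> down_image d D j \<Longrightarrow> up_map d U j z = (\<lambda>n. 0)"
  unfolding down_image_def using colinked_up_down by blast

lemma down_image_lift:
  assumes col: "colinked_chain d U D" and z: "z \<in> down_image d D j"
  shows "\<exists>z'\<in>down_image d D (j + 1). down_map d D j z' = z"
proof -
  obtain w where w: "w \<in> cspace d (j + 1)" "z = down_map d D j w"
    using z unfolding down_image_def by blast
  \<comment> \<open>\<open>V\<^sub>j\<^sub>+\<^sub>1 = Im v\<^sub>j\<^sub>+\<^sub>1 + Im v\<^sup>j\<close>, and \<open>v\<^sub>j\<close> kills \<open>Im v\<^sup>j\<close>.\<close>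
  obtain y u where yu: "y \<in> cspace d (j + 1 + 1)" "u \<in> cspace d j"
    "w = (\<lambda>n. down_map d D (j + 1) y n + up_map d U j u n)"
    using col w(1) unfolding colinked_chain_def by fastforce
  have "down_map d D j (down_map d D (j + 1) y) = z"
    using w(2) colinked_down_up[OF col yu(2)] by (simp add: yu(3) down_map_add)
  then show ?thesis using yu(1) unfolding down_image_def by blast
qed

lemma lift_along_nonzero_link:
  assumes W: "W \<in> LP d U D" and nz: "\<not> zero_link d U D W j"
    and y: "y \<in> W j" "y \<noteq> (\<lambda>n. 0)" and up_y: "up_map d U j y = (\<lambda>n. 0)"
  shows "\<exists>u\<in>W (j + 1). down_map d D j u = y"
proof -
  obtain v where v: "v \<in> W (j + 1)" "v \<noteq> (\<lambda>n. 0)"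
    using is_line_nonzero[OF LP_is_line[OF W]] by blast
  have down_v: "down_map d D j v \<noteq> (\<lambda>n. 0)" using zero_link_iff[OF W y v] nz up_y by simp
  have "down_map d D j v \<in> line_of y"
    using LP_down_map[OF W v(1)] is_line_eq_line_of[OF LP_is_line[OF W] y] by simp
  then obtain c where c: "down_map d D j v = (\<lambda>n. c * y n)" by (rule line_ofE)
  with down_v have "c \<noteq> 0" by auto
  with c have "down_map d D j (\<lambda>n. inverse c * v n) = y" by (simp add: down_map_scale fun_eq_iff)
  moreover have "(\<lambda>n. inverse c * v n) \<in> W (j + 1)"
    by (rule is_line_scale[OF LP_is_line[OF W] v(1)])
  ultimately show ?thesis by blast
qed

definition deform_step :: "(int \<Rightarrow> nat) \<Rightarrow> (int \<Rightarrow> nat \<Rightarrow> nat \<Rightarrow> 'a::field) \<Rightarrow> (int \<Rightarrow> nat \<Rightarrow> nat \<Rightarrow> 'a)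
    \<Rightarrow> int \<Rightarrow> (nat \<Rightarrow> 'a) \<Rightarrow> (nat \<Rightarrow> 'a) \<Rightarrow> (nat \<Rightarrow> 'a) \<Rightarrow> (nat \<Rightarrow> 'a) \<Rightarrow> bool" where
  "deform_step d U D j y z y' z' \<longleftrightarrow>
     (up_map d U j y \<noteq> (\<lambda>n. 0) \<and> y' = up_map d U j y \<and> z' = (\<lambda>n. 0))
     \<or> (up_map d U j y = (\<lambda>n. 0) \<and> down_map d D j y' = y \<and> down_map d D j z' = z)"

lemma deform_step_exists:
  assumes col: "colinked_chain d U D" and W: "W \<in> LP d U D" and nz: "\<not> zero_link d U D W j"
    and y: "y \<in> W j" "y \<noteq> (\<lambda>n. 0)" and z: "z \<in> down_image d D j"
  shows "\<exists>y' z'. y' \<in> W (j + 1) \<and> y' \<noteq> (\<lambda>n. 0) \<and> z' \<in> down_image d D (j + 1)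
                 \<and> deform_step d U D j y z y' z'"
proof (cases "up_map d U j y = (\<lambda>n. 0)")
  case True
  obtain y' where y': "y' \<in> W (j + 1)" "down_map d D j y' = y"
    using lift_along_nonzero_link[OF W nz y True] by blast
  with y(2) have "y' \<noteq> (\<lambda>n. 0)" by (auto simp: down_map_zero)
  moreover obtain z' where "z' \<in> down_image d D (j + 1)" "down_map d D j z' = z"
    using down_image_lift[OF col z] by blast
  ultimately show ?thesis using True y' by (auto simp: deform_step_def)
next
  case False
  then show ?thesis
    using LP_up_map[OF W y(1)] zero_in_down_image by (auto simp: deform_step_def)
qed

lemma deformation_sequences_exist:
  assumes col: "colinked_chain d U D" and W: "W \<in> LP d U D"
    and nz: "\<forall>j>i0. \<not> zero_link d U D W j"
    and y0: "y0 \<in> W (i0 + 1)" "y0 \<noteq> (\<lambda>n. 0)" and z0: "z0 \<in> down_image d D (i0 + 1)"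
  shows "\<exists>y z. z (i0 + 1) = z0 \<and>
           (\<forall>j>i0. y j \<in> W j \<and> y j \<noteq> (\<lambda>n. 0) \<and> z j \<in> down_image d D j
                  \<and> deform_step d U D j (y j) (z j) (y (j + 1)) (z (j + 1)))"
proof -
  \<comment> \<open>Index \<open>k\<close> stands for \<open>j = i0 + 1 + k\<close>; the conjunct for \<open>k = 0\<close> fixes the start.\<close>
  define P where "P k yz \<longleftrightarrow> fst yz \<in> W (i0 + 1 + int k) \<and> fst yz \<noteq> (\<lambda>n. 0)
      \<and> snd yz \<in> down_image d D (i0 + 1 + int k) \<and> (k = 0 \<longrightarrow> yz = (y0, z0))" for k yz
  define Q where
    "Q k yz yz' \<longleftrightarrow> deform_step d U D (i0 + 1 + int k) (fst yz) (snd yz) (fst yz') (snd yz')"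
    for k yz yz'
  have "\<exists>yz'. P (Suc k) yz' \<and> Q k yz yz'" if "P k yz" for k yz
    using deform_step_exists[OF col W, of "i0 + 1 + int k" "fst yz" "snd yz"] nz that
    by (auto simp: P_def Q_def add.assoc)
  then obtain s where s: "\<And>k. P k (s k) \<and> Q k (s k) (s (Suc k))"
    using dependent_nat_choice[of P Q] y0 z0 by (auto simp: P_def)
  define y where "y j = fst (s (nat (j - i0 - 1)))" for j
  define z where "z j = snd (s (nat (j - i0 - 1)))" for j
  have idx: "i0 + 1 + int (nat (j - i0 - 1)) = j" "nat (j + 1 - i0 - 1) = Suc (nat (j - i0 - 1))"
    if "j > i0" for j
    using that by auto
  show ?thesis
  proof (intro exI conjI allI impI)
    show "z (i0 + 1) = z0" using s[of 0] by (simp add: z_def P_def)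
    fix j assume "j > i0"
    then show "y j \<in> W j" "y j \<noteq> (\<lambda>n. 0)" "z j \<in> down_image d D j"
      "deform_step d U D j (y j) (z j) (y (j + 1)) (z (j + 1))"
      using s[of "nat (j - i0 - 1)"] idx[of j] by (simp_all add: y_def z_def P_def Q_def)
  qed
qed

locale deformation =
  fixes d :: "int \<Rightarrow> nat" and U D :: "int \<Rightarrow> nat \<Rightarrow> nat \<Rightarrow> 'a::field"
    and W :: "int \<Rightarrow> (nat \<Rightarrow> 'a) set" and i0 :: int and y z :: "int \<Rightarrow> nat \<Rightarrow> 'a"
  assumes colinked: "colinked_chain d U D"
    and W: "W \<in> LP d U D"
    and zero_link_i0: "zero_link d U D W i0"
    and down_z_start: "down_map d D i0 (z (i0 + 1)) \<in> W i0" "down_map d D i0 (z (i0 + 1)) \<noteq> (\<lambda>n. 0)"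
    and steps: "\<And>j. j > i0 \<Longrightarrow> y j \<in> W j \<and> y j \<noteq> (\<lambda>n. 0) \<and> z j \<in> down_image d D j
                  \<and> deform_step d U D j (y j) (z j) (y (j + 1)) (z (j + 1))"
begin

definition deformed_vec :: "'a \<Rightarrow> int \<Rightarrow> nat \<Rightarrow> 'a" where
  "deformed_vec t j = (\<lambda>n. y j n + t * z j n)"

definition deformed :: "'a \<Rightarrow> int \<Rightarrow> (nat \<Rightarrow> 'a) set" where
  "deformed t j = (if j \<le> i0 then W j else line_of (deformed_vec t j))"

lemma deformed_vec_in_cspace:
  assumes "j > i0"
  shows "deformed_vec t j \<in> cspace d j"
proof -
  have "z j \<in> down_image d D j" using steps[OF assms] by blast
  then have "z j \<in> cspace d j" unfolding down_image_def using down_map_in_cspace by auto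
  moreover have "y j \<in> cspace d j"
    using steps[OF assms] is_line_subset_cspace[OF LP_is_line[OF W]] by blast
  ultimately show ?thesis by (simp add: deformed_vec_def cspace_def)
qed

lemma deformed_vec_link_above:
  assumes j: "j > i0"
  shows "up_map d U j (deformed_vec t j) \<in> line_of (deformed_vec t (j + 1))"
    and "down_map d D j (deformed_vec t (j + 1)) \<in> line_of (deformed_vec t j)"
    and "up_map d U j (deformed_vec t j) \<noteq> (\<lambda>n. 0)
         \<or> down_map d D j (deformed_vec t (j + 1)) = deformed_vec t j"
proof -
  have up: "up_map d U j (deformed_vec t j) = up_map d U j (y j)"
    using up_map_down_image[OF colinked, of "z j" j] steps[OF j]
    by (simp add: deformed_vec_def up_map_add up_map_scale)
  from steps[OF j] consider
      "up_map d U j (y j) \<noteq> (\<lambda>n. 0)" "y (j + 1) = up_map d U j (y j)" "z (j + 1) = (\<lambda>n. 0)"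
    | "up_map d U j (y j) = (\<lambda>n. 0)" "down_map d D j (y (j + 1)) = y j"
      "down_map d D j (z (j + 1)) = z j"
    unfolding deform_step_def by blast
  then have "up_map d U j (deformed_vec t j) \<in> line_of (deformed_vec t (j + 1))
      \<and> down_map d D j (deformed_vec t (j + 1)) \<in> line_of (deformed_vec t j)
      \<and> (up_map d U j (deformed_vec t j) \<noteq> (\<lambda>n. 0)
         \<or> down_map d D j (deformed_vec t (j + 1)) = deformed_vec t j)"
  proof cases
    case 1
    then have "deformed_vec t (j + 1) = up_map d U j (y j)" by (simp add: deformed_vec_def)
    moreover have "down_map d D j (up_map d U j (y j)) = (\<lambda>n. 0)"
      using colinked_down_up[OF colinked] steps[OF j] is_line_subset_cspace[OF LP_is_line[OF W]]
      by blast
    ultimately show ?thesis using 1 by (simp add: up self_in_line_of zero_in_line_of)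
  next
    case 2
    then have "down_map d D j (deformed_vec t (j + 1)) = deformed_vec t j"
      by (simp add: deformed_vec_def down_map_add down_map_scale)
    then show ?thesis using 2 by (simp add: up self_in_line_of zero_in_line_of)
  qed
  then show "up_map d U j (deformed_vec t j) \<in> line_of (deformed_vec t (j + 1))"
    and "down_map d D j (deformed_vec t (j + 1)) \<in> line_of (deformed_vec t j)"
    and "up_map d U j (deformed_vec t j) \<noteq> (\<lambda>n. 0)
         \<or> down_map d D j (deformed_vec t (j + 1)) = deformed_vec t j"
    by blast+
qed

lemma deformed_vec_nonzero:
  assumes start: "deformed_vec t (i0 + 1) \<noteq> (\<lambda>n. 0)" and j: "j > i0"
  shows "deformed_vec t j \<noteq> (\<lambda>n. 0)"
proof -
  have "i0 + 1 \<le> j" using j by simp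
  then show ?thesis
  proof (induction j rule: int_ge_induct)
    case (step j)
    then have "j > i0" by simp
    from deformed_vec_link_above(1,3)[OF this, of t] show ?case
      using step.IH by (auto simp: mem_line_of_iff down_map_zero)
  qed (rule start)
qed

lemma deformed_link_start:
  assumes t: "t \<noteq> 0"
  shows "up_map d U i0 ` deformed t i0 \<subseteq> deformed t (i0 + 1)"
    and "down_map d D i0 ` deformed t (i0 + 1) \<subseteq> deformed t i0"
    and "\<not> zero_link d U D (deformed t) i0"
proof -
  define w where "w = down_map d D i0 (z (i0 + 1))"
  have lines: "deformed t i0 = line_of w" "deformed t (i0 + 1) = line_of (deformed_vec t (i0 + 1))"
    using is_line_eq_line_of[OF LP_is_line[OF W]] down_z_start by (simp_all add: deformed_def w_def)
  have "down_map d D i0 (y (i0 + 1)) = (\<lambda>n. 0)"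
    using zero_link_i0 steps[of "i0 + 1"] by (simp add: zero_link_def)
  then have down_vec: "down_map d D i0 (deformed_vec t (i0 + 1)) = (\<lambda>n. t * w n)"
    by (simp add: deformed_vec_def w_def down_map_add down_map_scale)
  have "up_map d U i0 w = (\<lambda>n. 0)"
    using zero_link_i0 down_z_start by (simp add: zero_link_def w_def)
  then show "up_map d U i0 ` deformed t i0 \<subseteq> deformed t (i0 + 1)"
    unfolding lines by (intro image_line_of_subset[OF up_map_scale]) (simp add: zero_in_line_of)
  show "down_map d D i0 ` deformed t (i0 + 1) \<subseteq> deformed t i0"
    unfolding lines
    by (intro image_line_of_subset[OF down_map_scale]) (simp add: down_vec scaled_in_line_of)
  have "down_map d D i0 (deformed_vec t (i0 + 1)) \<noteq> (\<lambda>n. 0)"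
    using t down_z_start(2) by (simp add: down_vec w_def fun_eq_iff)
  then show "\<not> zero_link d U D (deformed t) i0" unfolding zero_link_line_of[OF lines] by blast
qed

lemma deformed_link_above:
  assumes nz: "deformed_vec t (i0 + 1) \<noteq> (\<lambda>n. 0)" and j: "j > i0"
  shows "up_map d U j ` deformed t j \<subseteq> deformed t (j + 1)"
    and "down_map d D j ` deformed t (j + 1) \<subseteq> deformed t j"
    and "\<not> zero_link d U D (deformed t) j"
proof -
  have lines: "deformed t j = line_of (deformed_vec t j)"
    "deformed t (j + 1) = line_of (deformed_vec t (j + 1))"
    using j by (simp_all add: deformed_def)
  show "up_map d U j ` deformed t j \<subseteq> deformed t (j + 1)"
    unfolding lines
    by (intro image_line_of_subset[OF up_map_scale] deformed_vec_link_above(1)[OF j])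
  show "down_map d D j ` deformed t (j + 1) \<subseteq> deformed t j"
    unfolding lines
    by (intro image_line_of_subset[OF down_map_scale] deformed_vec_link_above(2)[OF j])
  have "up_map d U j (deformed_vec t j) \<noteq> (\<lambda>n. 0)
      \<or> down_map d D j (deformed_vec t (j + 1)) \<noteq> (\<lambda>n. 0)"
    using deformed_vec_link_above(3)[OF j, of t] deformed_vec_nonzero[OF nz j] by auto
  then show "\<not> zero_link d U D (deformed t) j" unfolding zero_link_line_of[OF lines] by blast
qed

lemma deformed_link:
  assumes t: "t \<noteq> 0" and nz: "deformed_vec t (i0 + 1) \<noteq> (\<lambda>n. 0)"
  shows "up_map d U j ` deformed t j \<subseteq> deformed t (j + 1)"
    and "down_map d D j ` deformed t (j + 1) \<subseteq> deformed t j"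
    and "zero_link d U D (deformed t) j \<Longrightarrow> zero_link d U D W j \<and> j \<noteq> i0"
proof -
  consider "j < i0" | "j = i0" | "j > i0" by linarith
  then have "up_map d U j ` deformed t j \<subseteq> deformed t (j + 1)
      \<and> down_map d D j ` deformed t (j + 1) \<subseteq> deformed t j
      \<and> (zero_link d U D (deformed t) j \<longrightarrow> zero_link d U D W j \<and> j \<noteq> i0)"
  proof cases
    case 1
    then have "deformed t j = W j" "deformed t (j + 1) = W (j + 1)" by (simp_all add: deformed_def)
    then show ?thesis using LP_up_map[OF W] LP_down_map[OF W] 1 by (auto simp: zero_link_def)
  qed (use deformed_link_start[OF t] deformed_link_above[OF nz] in auto)
  then show "up_map d U j ` deformed t j \<subseteq> deformed t (j + 1)"
    and "down_map d D j ` deformed t (j + 1) \<subseteq> deformed t j"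
    and "zero_link d U D (deformed t) j \<Longrightarrow> zero_link d U D W j \<and> j \<noteq> i0"
    by blast+
qed

lemma deformed_in_LP:
  assumes t: "t \<noteq> 0" and nz: "deformed_vec t (i0 + 1) \<noteq> (\<lambda>n. 0)"
  shows "deformed t \<in> LP d U D"
proof -
  have "is_line d j (deformed t j)" for j
    using LP_is_line[OF W] is_line_line_of[OF deformed_vec_in_cspace deformed_vec_nonzero[OF nz]]
    by (simp add: deformed_def)
  then show ?thesis unfolding LP_def using deformed_link[OF t nz] by blast
qed

lemma vanishes_on_if_vanishes_on_deformed:
  assumes inf: "infinite (UNIV :: 'a set)" and f: "multihom H d f"
    and deformed: "\<And>t. t \<noteq> 0 \<Longrightarrow> deformed_vec t (i0 + 1) \<noteq> (\<lambda>n. 0) \<Longrightarrow> vanishes_on H f (deformed t)"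
  shows "vanishes_on H f W"
proof -
  obtain x where x: "\<And>j. x j \<in> W j" "\<And>j. x j \<noteq> (\<lambda>n. 0)"
    using LP_representative[OF W] by blast
  define A where "A j = (if j \<le> i0 then x j else y j)" for j
  define B where "B j = (if j \<le> i0 then (\<lambda>n. 0) else z j)" for j
  have AB: "(\<lambda>n. A j n + t * B j n) = (if j \<le> i0 then x j else deformed_vec t j)" for t j
    by (simp add: A_def B_def deformed_vec_def)
  obtain p where p: "\<And>t. f (\<lambda>j n. A j n + t * B j n) = poly p t"
    using polyfun_along_line[of f H d A B] f unfolding multihom_def by blast
  have "finite {t. deformed_vec t (i0 + 1) = (\<lambda>n. 0)}"
    unfolding deformed_vec_def by (rule finite_zeros_affine_line) (use steps[of "i0 + 1"] in simp)
  moreover have "poly p t = 0" if t0: "t \<noteq> 0" and nz_t: "deformed_vec t (i0 + 1) \<noteq> (\<lambda>n. 0)" for t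
  proof -
    have "\<forall>j\<in>H. (\<lambda>n. A j n + t * B j n) \<in> deformed t j \<and> (\<lambda>n. A j n + t * B j n) \<noteq> (\<lambda>n. 0)"
      using x deformed_vec_nonzero[OF nz_t] by (simp add: AB deformed_def self_in_line_of)
    with deformed[OF t0 nz_t] have "f (\<lambda>j n. A j n + t * B j n) = 0" by (rule vanishes_onD)
    then show ?thesis by (simp add: p)
  qed
  ultimately have "p = 0"
    using poly_eq_0_if_cofinite_roots[OF inf, of "insert 0 {t. deformed_vec t (i0 + 1) = (\<lambda>n. 0)}"]
    by blast
  then have "f A = 0" using p[of 0] by simp
  moreover have "\<forall>j\<in>H. A j \<in> W j \<and> A j \<noteq> (\<lambda>n. 0)"
    using x steps by (simp add: A_def)
  ultimately show ?thesis
    using vanishes_on_if_zero_at_representative[OF f LP_is_line[OF W]] by blast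
qed

end

lemma deformation_at_last_zero_link:
  fixes U D :: "int \<Rightarrow> nat \<Rightarrow> nat \<Rightarrow> 'a::field"
  assumes col: "colinked_chain d U D"
    and kernel_up: "\<And>i x. x \<in> cspace d i \<Longrightarrow> up_map d U i x = (\<lambda>_. 0) \<Longrightarrow>
                      x \<in> down_map d D i ` cspace d (i + 1)"
    and W: "W \<in> LP d U D" and zl: "zero_link d U D W i0" and nz: "\<forall>j>i0. \<not> zero_link d U D W j"
  shows "\<exists>y z. deformation d U D W i0 y z"
proof -
  obtain x where x: "\<And>j. x j \<in> W j" "\<And>j. x j \<noteq> (\<lambda>n. 0)"
    using LP_representative[OF W] by blast
  have "x i0 \<in> cspace d i0" using x is_line_subset_cspace[OF LP_is_line[OF W]] by blast
  moreover have "up_map d U i0 (x i0) = (\<lambda>n. 0)" using zl x by (simp add: zero_link_def)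
  ultimately have "x i0 \<in> down_image d D i0" unfolding down_image_def by (rule kernel_up)
  then obtain z0 where z0: "z0 \<in> down_image d D (i0 + 1)" "down_map d D i0 z0 = x i0"
    using down_image_lift[OF col] by blast
  obtain y z where "z (i0 + 1) = z0"
    and "\<forall>j>i0. y j \<in> W j \<and> y j \<noteq> (\<lambda>n. 0) \<and> z j \<in> down_image d D j
                  \<and> deform_step d U D j (y j) (z j) (y (j + 1)) (z (j + 1))"
    using deformation_sequences_exist[OF col W nz x(1,2) z0(1)] by blast
  then have "deformation d U D W i0 y z"
    by unfold_locales (simp_all add: col W zl z0(2) x)
  then show ?thesis by blast
qed

lemma vanishes_on_by_deformation:
  fixes U D :: "int \<Rightarrow> nat \<Rightarrow> nat \<Rightarrow> 'a::field"
  assumes col: "colinked_chain d U D"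
    and kernel_up: "\<And>i x. x \<in> cspace d i \<Longrightarrow> up_map d U i x = (\<lambda>_. 0) \<Longrightarrow>
                      x \<in> down_map d D i ` cspace d (i + 1)"
    and inf: "infinite (UNIV :: 'a set)"
    and W: "W \<in> LP d U D" and zl: "zero_link d U D W i0" and nz: "\<forall>j>i0. \<not> zero_link d U D W j"
    and f: "multihom H d f"
    and fewer: "\<And>W'. W' \<in> LP d U D \<Longrightarrow> (\<forall>j. zero_link d U D W' j \<longrightarrow> zero_link d U D W j \<and> j \<noteq> i0)
                  \<Longrightarrow> vanishes_on H f W'"
  shows "vanishes_on H f W"
proof -
  obtain y z where "deformation d U D W i0 y z"
    using deformation_at_last_zero_link[OF col kernel_up W zl nz] by blast
  then interpret deformation d U D W i0 y z .
  show ?thesis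
  proof (rule vanishes_on_if_vanishes_on_deformed[OF inf f])
    fix t assume "t \<noteq> 0" "deformed_vec t (i0 + 1) \<noteq> (\<lambda>n. 0)"
    then show "vanishes_on H f (deformed t)"
      using fewer deformed_in_LP deformed_link(3) by blast
  qed
qed

lemma finite_zero_links:
  assumes W: "W \<in> LP d U D"
    and inj_right: "\<forall>j\<ge>b. inj_on (down_map d D j) (cspace d (j + 1))"
    and inj_left: "\<forall>j<a. inj_on (up_map d U j) (cspace d j)"
  shows "finite {j. zero_link d U D W j}"
proof (rule finite_subset)
  show "{j. zero_link d U D W j} \<subseteq> {a..<b}"
    using zero_link_within[OF W _ inj_right inj_left] by auto
qed simp

lemma vanishes_on_LP_if_vanishes_on_LP_exact:
  fixes U D :: "int \<Rightarrow> nat \<Rightarrow> nat \<Rightarrow> 'a::field"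
  assumes col: "colinked_chain d U D"
    and kernel_up: "\<And>i x. x \<in> cspace d i \<Longrightarrow> up_map d U i x = (\<lambda>_. 0) \<Longrightarrow>
                      x \<in> down_map d D i ` cspace d (i + 1)"
    and inf: "infinite (UNIV :: 'a set)"
    and inj_right: "\<forall>j\<ge>b. inj_on (down_map d D j) (cspace d (j + 1))"
    and inj_left: "\<forall>j<a. inj_on (up_map d U j) (cspace d j)"
    and f: "multihom {a..b} d f" and exact: "\<forall>W'\<in>LP_exact d U D. vanishes_on {a..b} f W'"
    and W: "W \<in> LP d U D"
  shows "vanishes_on {a..b} f W"
  using W
proof (induction "card {j. zero_link d U D W j}" arbitrary: W rule: less_induct)
  case less
  note fin = finite_zero_links[OF less.prems inj_right inj_left]
  show ?case
  proof (cases "{j. zero_link d U D W j} = {}")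
    case True
    then have "W \<in> LP_exact d U D"
      using less.prems exact_on_iff_no_zero_link[OF col less.prems] by (simp add: LP_exact_def)
    then show ?thesis using exact by blast
  next
    case False
    define i0 where "i0 = Max {j. zero_link d U D W j}"
    have zl: "zero_link d U D W i0"
      using Max_in[OF fin False] by (simp add: i0_def)
    have nz: "\<forall>j>i0. \<not> zero_link d U D W j"
    proof (intro allI impI notI)
      fix j assume "i0 < j" "zero_link d U D W j"
      then have "j \<le> i0" unfolding i0_def using Max_ge[OF fin] by blast
      with \<open>i0 < j\<close> show False by simp
    qed
    show ?thesis
    proof (rule vanishes_on_by_deformation[OF col kernel_up inf less.prems zl nz f])
      fix W' assume W': "W' \<in> LP d U D"
        and fewer: "\<forall>j. zero_link d U D W' j \<longrightarrow> zero_link d U D W j \<and> j \<noteq> i0"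
      have "{j. zero_link d U D W' j} \<subset> {j. zero_link d U D W j}"
      proof
        show "{j. zero_link d U D W' j} \<subseteq> {j. zero_link d U D W j}" using fewer by blast
        show "{j. zero_link d U D W' j} \<noteq> {j. zero_link d U D W j}" using fewer zl by blast
      qed
      then have "card {j. zero_link d U D W' j} < card {j. zero_link d U D W j}"
        by (rule psubset_card_mono[OF fin])
      then show "vanishes_on {a..b} f W'" by (rule less.hyps[OF _ W'])
    qed
  qed
qed

lemma zariski_dense_LP_exact:
  fixes U D :: "int \<Rightarrow> nat \<Rightarrow> nat \<Rightarrow> 'a::field"
  assumes col: "colinked_chain d U D"
    and kernel_up: "\<And>i x. x \<in> cspace d i \<Longrightarrow> up_map d U i x = (\<lambda>_. 0) \<Longrightarrow>
                      x \<in> down_map d D i ` cspace d (i + 1)"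
    and inf: "infinite (UNIV :: 'a set)"
    and inj_right: "\<forall>j\<ge>b. inj_on (down_map d D j) (cspace d (j + 1))"
    and inj_left: "\<forall>j<a. inj_on (up_map d U j) (cspace d j)"
  shows "zariski_dense_in {a..b} d (LP d U D) (LP_exact d U D)"
  unfolding zariski_dense_in_def zariski_closed_in_iff
proof (intro allI impI)
  fix C assume "(\<exists>F. (\<forall>f\<in>F. multihom {a..b} d f) \<and> C = {W\<in>LP d U D. \<forall>f\<in>F. vanishes_on {a..b} f W})
      \<and> LP_exact d U D \<subseteq> C"
  then obtain F where F: "\<forall>f\<in>F. multihom {a..b} d f"
    and C: "C = {W\<in>LP d U D. \<forall>f\<in>F. vanishes_on {a..b} f W}" and sub: "LP_exact d U D \<subseteq> C"
    by blast
  have "vanishes_on {a..b} f W" if f: "f \<in> F" and W: "W \<in> LP d U D" for f W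
  proof -
    have "multihom {a..b} d f" using F f by blast
    moreover have "\<forall>W'\<in>LP_exact d U D. vanishes_on {a..b} f W'" using sub f C by blast
    ultimately show ?thesis
      using vanishes_on_LP_if_vanishes_on_LP_exact[OF col kernel_up inf inj_right inj_left _ _ W]
      by blast
  qed
  then show "C = LP d U D" unfolding C by blast
qed

theorem proposition3p10:
  fixes d :: "int \<Rightarrow> nat" and U D :: "int \<Rightarrow> nat \<Rightarrow> nat \<Rightarrow> 'k::field"
  assumes "colinked_chain d U D"
    and "exact_rep d U D"
    and "\<exists>H. finite H \<and> is_cosupport d U D H"
  shows "\<forall>H. finite_interval H \<and> is_cosupport d U D H \<longrightarrow>
           zariski_open_in H d (LP d (base_change U) (base_change D))
                                (LP_exact d (base_change U) (base_change D))
         \<and> zariski_dense_in H d (LP d (base_change U) (base_change D))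
                                (LP_exact d (base_change U) (base_change D))"
proof (intro allI impI)
  fix H assume H: "finite_interval H \<and> is_cosupport d U D H"
  then obtain a b where ab: "H = {a..b}" unfolding finite_interval_def by blast
  have cos: "is_cosupport d U D H" using H by blast
  note col = colinked_chain_base_change[OF assms(1)]
  note kernel_up = exact_rep_base_change_kernel_up_map[OF assms(2)]
  have inj_right: "\<forall>j\<ge>b. inj_on (down_map d (base_change D) j) (cspace d (j + 1))"
    by (auto simp: ab intro!: inj_on_down_map_base_change
        inj_on_down_map_right_of_cosupport[OF cos])
  have inj_left: "\<forall>j<a. inj_on (up_map d (base_change U) j) (cspace d j)"
    by (auto simp: ab intro!: inj_on_up_map_base_change inj_on_up_map_left_of_cosupport[OF cos])
  let ?LP = "LP d (base_change U) (base_change D)"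
  let ?LP_exact = "LP_exact d (base_change U) (base_change D)"
  show "zariski_open_in H d ?LP ?LP_exact \<and> zariski_dense_in H d ?LP ?LP_exact"
    unfolding ab
    using zariski_open_LP_exact[OF col inj_right inj_left]
      zariski_dense_LP_exact[OF col kernel_up infinite_UNIV_alg_closed inj_right inj_left]
    by blast
qed

end
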